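(* Let $Q$ be a quiver of type $\mathbb{A}_n$ with an arbitrary orientation. Then, with respect to the integral volume on $\mathbb{R}^n$, $$\mathrm{vol}\,P^+(Q)=\sharp\mathcal{T}^+(Q),\qquad \mathrm{vol}\,P^{\mathrm{clus}}(Q)=\sharp\mathcal{T}^{\mathrm{clus}}(Q),\qquad \mathrm{vol}\,P(Q)=\sharp\mathcal{T}(Q).$$
   Context: Let $k$ be a field and $n\ge 1$. A quiver $Q$ of type $\mathbb{A}_n$ has vertex set $Q_0=\{1,\dots,n\}$ and exactly one arrow between $i$ and $i+1$ for each $1\le i<n$, each arrow oriented arbitrarily. Modules are finite-dimensional representations of $Q$ over $k$, considered up to isomorphism; the dimension vector of $V$ is $\underline{\dim}\,V=(\dim V_1,\dots,\dim V_n)\in\mathbb{Z}^n$, and the support of $V$ is $\{i: V_i\neq 0\}$. Up to isomorphism the indecomposable modules are in bijection with intervals $[i,j]$, $1\le i\le j\le n$, the one for $[i,j]$ having dimension vector $e_i+\dots+e_j$. For $I\subseteq Q_0$, $Q|_I$ denotes the full subquiver on $I$; its modules are identified with the modules over $Q$ with support contained in $I$. A tilting module over $Q|_I$ is a module $T$ that is a direct sum of exactly $|I|$ pairwise non-isomorphic indecomposable modules with support in $I$ and satisfies $\mathrm{Ext}^1(T,T)=0$ (for $I=\emptyset$ this is the zero module). $\mathcal{T}^+(Q)$ is the set of tilting modules over $Q$. A support tilting module is a module $T$ which is a tilting module over $Q|_{\mathrm{supp}\,T}$ (the zero module included); $\mathcal{T}^{\mathrm{clus}}(Q)$ is the set of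 these. A $2$-support tilting module is a pair $(T^+,T^-)$ such that for some $I\subseteq Q_0$, $T^+$ is a tilting module over $Q|_I$ and $T^-$ is a tilting module over $Q|_{Q_0\setminus I}$; $\mathcal{T}(Q)$ is the set of these. For a tilting module $T$ let $\sigma_T=\mathrm{conv}(\{0\}\cup\{\underline{\dim}\,X : X \text{ an indecomposable summand of } T\})$. For a support tilting module $T$ with support $I$ let $\sigma_T=\mathrm{conv}(\{0\}\cup\{\underline{\dim}\,X: X \text{ indecomposable summand of } T\}\cup\{-e_j: j\in Q_0\setminus I\})$. For a $2$-support tilting module $T=(T^+,T^-)$ let $\sigma_T=\mathrm{conv}(\{0\}\cup\{\underline{\dim}\,X: X\text{ indecomposable summand of }T^+\}\cup\{-\underline{\dim}\,Y: Y\text{ indecomposable summand of }T^-\})$. Define $P^+(Q)=\bigcup_{T\in\mathcal{T}^+(Q)}\sigma_T$, $P^{\mathrm{clus}}(Q)=\bigcup_{T\in\mathcal{T}^{\mathrm{clus}}(Q)}\sigma_T$, $P(Q)=\bigcup_{T\in\mathcal{T}(Q)}\sigma_T$, all subsets of $\mathbb{R}^n$. The integral volume $\mathrm{vol}$ on $\mathbb{R}^n$ is $n!$ times Lebesgue measure (so a simplex spanned by $0$ and a $\mathbb{Z}$-basis of $\mathbb{Z}^n$ has volume $1$). *)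

theory Defs
  imports "HOL-Analysis.Analysis"
begin

text \<open>Quiver of type A_n: vertices 1..n, for 1 <= i < n one arrow between i and i+1;
  orient i = True means the arrow is i -> i+1, otherwise i+1 -> i.\<close>

definition asrc :: "(nat \<Rightarrow> bool) \<Rightarrow> nat \<Rightarrow> nat" where
  "asrc orient i = (if orient i then i else Suc i)"

definition atgt :: "(nat \<Rightarrow> bool) \<Rightarrow> nat \<Rightarrow> nat" where
  "atgt orient i = (if orient i then Suc i else i)"

text \<open>Indecomposable modules up to isomorphism: intervals [i,j], 1 <= i <= j <= n.
  The interval module has k at vertices i..j and identity maps along arrows inside.\<close>

type_synonym interval = "nat \<times> nat"

definition intervals :: "nat \<Rightarrow> interval set" where
  "intervals n = {(i, j). 1 \<le> i \<and> i \<le> j \<and> j \<le> n}"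

definition isupp :: "interval \<Rightarrow> nat set" where
  "isupp X = {fst X..snd X}"

text \<open>Ext^1(X,Y) over the path algebra kQ is the cokernel of Ringel's map
  d : (sum over vertices v) Hom_k(X_v,Y_v) -> (sum over arrows a) Hom_k(X_(s a), Y_(t a)),
  d(f)_a = Y_a f_(s a) - f_(t a) X_a.  For interval modules all nonzero spaces are k and
  all nonzero maps are identities, so an element of the source is a function f supported
  on supp X \<inter> supp Y, the target has one copy of k for each arrow a with s a in supp X and
  t a in supp Y, and d(f)_a = f(s a) - f(t a).  Ext^1(X,Y) = 0 iff d is surjective.\<close>

definition ext1_zero :: "'k::field itself \<Rightarrow> (nat \<Rightarrow> bool) \<Rightarrow> nat \<Rightarrow> interval \<Rightarrow> interval \<Rightarrow> bool" where
  "ext1_zero k orient n X Y \<longleftrightarrow>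
     (\<forall>g :: nat \<Rightarrow> 'k. \<exists>f :: nat \<Rightarrow> 'k.
        (\<forall>v. v \<notin> {1..n} \<inter> isupp X \<inter> isupp Y \<longrightarrow> f v = 0) \<and>
        (\<forall>i\<in>{1..<n}. asrc orient i \<in> isupp X \<and> atgt orient i \<in> isupp Y \<longrightarrow>
            g i = f (asrc orient i) - f (atgt orient i)))"

text \<open>A basic module (direct sum of pairwise non-isomorphic indecomposables) is represented by
  the finite set of its indecomposable summands.  Ext^1 is additive, so Ext^1(T,T) = 0 iff
  Ext^1(X,Y) = 0 for all summands X, Y.\<close>

definition tilting_on :: "'k::field itself \<Rightarrow> (nat \<Rightarrow> bool) \<Rightarrow> nat \<Rightarrow> nat set \<Rightarrow> interval set \<Rightarrow> bool" where
  "tilting_on k orient n I T \<longleftrightarrow>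
     T \<subseteq> intervals n \<and> (\<forall>X\<in>T. isupp X \<subseteq> I) \<and> card T = card I \<and>
     (\<forall>X\<in>T. \<forall>Y\<in>T. ext1_zero k orient n X Y)"

definition msupp :: "interval set \<Rightarrow> nat set" where
  "msupp T = (\<Union>X\<in>T. isupp X)"

definition tilt_plus :: "'k::field itself \<Rightarrow> (nat \<Rightarrow> bool) \<Rightarrow> nat \<Rightarrow> interval set set" where
  "tilt_plus k orient n = {T. tilting_on k orient n {1..n} T}"

definition tilt_clus :: "'k::field itself \<Rightarrow> (nat \<Rightarrow> bool) \<Rightarrow> nat \<Rightarrow> interval set set" where
  "tilt_clus k orient n = {T. tilting_on k orient n (msupp T) T}"

definition tilt_two :: "'k::field itself \<Rightarrow> (nat \<Rightarrow> bool) \<Rightarrow> nat \<Rightarrow> (interval set \<times> interval set) set" where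
  "tilt_two k orient n = {(Tp, Tm). \<exists>I \<subseteq> {1..n}.
      tilting_on k orient n I Tp \<and> tilting_on k orient n ({1..n} - I) Tm}"

text \<open>R^n is real^'n, with vertex i identified with the coordinate e i for a bijection
  e : {1..n} -> 'n.\<close>

definition dimv :: "(nat \<Rightarrow> 'n::finite) \<Rightarrow> interval \<Rightarrow> real^'n" where
  "dimv e X = (\<Sum>i\<in>isupp X. axis (e i) 1)"

definition sigma_plus :: "(nat \<Rightarrow> 'n::finite) \<Rightarrow> interval set \<Rightarrow> (real^'n) set" where
  "sigma_plus e T = convex hull (insert 0 (dimv e ` T))"

definition sigma_clus :: "nat \<Rightarrow> (nat \<Rightarrow> 'n::finite) \<Rightarrow> interval set \<Rightarrow> (real^'n) set" where
  "sigma_clus n e T = convex hull (insert 0 (dimv e ` T \<union>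
      (\<lambda>j. - axis (e j) 1) ` ({1..n} - msupp T)))"

definition sigma_two :: "(nat \<Rightarrow> 'n::finite) \<Rightarrow> interval set \<times> interval set \<Rightarrow> (real^'n) set" where
  "sigma_two e TT = convex hull (insert 0 (dimv e ` fst TT \<union> (\<lambda>Y. - dimv e Y) ` snd TT))"

definition P_plus :: "'k::field itself \<Rightarrow> (nat \<Rightarrow> bool) \<Rightarrow> nat \<Rightarrow> (nat \<Rightarrow> 'n::finite) \<Rightarrow> (real^'n) set" where
  "P_plus k orient n e = (\<Union>T\<in>tilt_plus k orient n. sigma_plus e T)"

definition P_clus :: "'k::field itself \<Rightarrow> (nat \<Rightarrow> bool) \<Rightarrow> nat \<Rightarrow> (nat \<Rightarrow> 'n::finite) \<Rightarrow> (real^'n) set" where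
  "P_clus k orient n e = (\<Union>T\<in>tilt_clus k orient n. sigma_clus n e T)"

definition P_two :: "'k::field itself \<Rightarrow> (nat \<Rightarrow> bool) \<Rightarrow> nat \<Rightarrow> (nat \<Rightarrow> 'n::finite) \<Rightarrow> (real^'n) set" where
  "P_two k orient n e = (\<Union>T\<in>tilt_two k orient n. sigma_two e T)"

definition ivol :: "nat \<Rightarrow> (real^'n::finite) set \<Rightarrow> real" where
  "ivol n S = fact n * measure lborel S"

end

theory Submission
  imports Defs
begin

text \<open>Each \<open>\<sigma>\<^sub>T\<close> is a simplex spanned by \<open>0\<close> and \<open>n\<close> integer vectors forming a basis of \<open>\<int>\<^sup>n\<close>,
  so its integral volume is \<open>1\<close>.  Unimodularity comes from reading an interval \<open>[i, j]\<close> as the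
  edge \<open>{i - 1, j}\<close> of a graph on \<open>{0..n}\<close>: its dimension vector is a difference of prefix sums of
  coordinate vectors, and \<open>Ext\<^sup>1(T, T) = 0\<close> makes the summands of a tilting module over an interval
  a spanning tree, so the coordinate vectors lie in their integer span.

  Distinct simplices meet in a null set, because a point in the open cone of \<open>\<sigma>\<^sub>T\<close> determines \<open>T\<close>:
  its coordinates fix the total weight entering and leaving each vertex of that graph, and again
  by \<open>Ext\<^sup>1(T, T) = 0\<close> the summands with the largest left end receive these weights in a forced
  greedy order, so they can be peeled off inductively.  Hence the volume of each polytope is the
  number of its simplices.\<close>

section \<open>Unimodular simplices\<close>

lemma det_matrix_shear:
  fixes m n :: "'n::finite"
  assumes "m \<noteq> n"
  shows "det (matrix (\<lambda>v::real^'n. \<chi> i. if i = m then v $ m + v $ n else v $ i)) = 1"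
proof -
  have "matrix (\<lambda>v::real^'n. \<chi> i. if i = m then v $ m + v $ n else v $ i)
      = (\<chi> k. if k = m then row m (mat 1) + 1 *s row n (mat 1) else row k (mat 1 :: real^'n^'n))"
    by (auto simp: matrix_def vec_eq_iff row_def mat_def axis_def)
  then show ?thesis
    using det_row_operation[OF assms, of "mat 1 :: real^'n^'n" 1] by simp
qed

lemma measure_shear_image:
  fixes S :: "(real^'n::finite) set" and m n :: 'n
  defines "h \<equiv> \<lambda>v::real^'n. \<chi> i. if i = m then v $ m + v $ n else v $ i"
  assumes "m \<noteq> n" and S: "S \<in> lmeasurable"
  shows "h ` S \<in> lmeasurable \<and> measure lebesgue (h ` S) = measure lebesgue S"
proof -
  have lin: "linear h"
    unfolding h_def by (rule linearI) (auto simp: algebra_simps vec_eq_iff)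
  have "measure lebesgue (h ` cbox a b) = measure lebesgue (cbox a b)" for a b
  proof (cases "cbox a b = {}")
    case False
    \<comment> \<open>\<open>measure_shear_interval\<close> needs \<open>0 \<le> a $ n\<close>, so move the box to the origin\<close>
    have box: "cbox a b = (+) a ` cbox 0 (b - a)"
      using cbox_translation[of a 0 "b - a"] by simp
    have "h ` cbox a b = (+) (h a) ` h ` cbox 0 (b - a)"
      unfolding box image_comp by (rule image_cong) (simp_all add: linear_add[OF lin])
    then have "measure lebesgue (h ` cbox a b) = measure lebesgue (h ` cbox 0 (b - a))"
      by (simp add: measure_translation)
    also have "\<dots> = measure lebesgue (cbox 0 (b - a))"
      unfolding h_def using \<open>m \<noteq> n\<close> False box by (intro measure_shear_interval) auto
    also have "\<dots> = measure lebesgue (cbox a b)"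
      unfolding box by (simp add: measure_translation)
    finally show ?thesis .
  qed simp
  then show ?thesis
    using measure_linear_sufficient[OF lin S, of 1] by simp
qed

lemma measure_swap_coordinates_image:
  fixes S :: "(real^'n::finite) set" and m n :: 'n
  defines "h \<equiv> \<lambda>v::real^'n. \<chi> i. v $ Transposition.transpose m n i"
  assumes S: "S \<in> lmeasurable"
  shows "h ` S \<in> lmeasurable \<and> measure lebesgue (h ` S) = measure lebesgue S"
proof -
  have lin: "linear h"
    unfolding h_def by (rule linearI) (simp_all add: vec_eq_iff)
  have "measure lebesgue (h ` cbox a b) = measure lebesgue (cbox a b)" for a b
  proof (cases "cbox a b = {}")
    case False
    have box: "h ` cbox a b = cbox (h a) (h b)"
      unfolding h_def
      by (auto simp: image_iff lambda_swap_Galois mem_box_cart) (metis transpose_involutory)+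
    moreover have "cbox (h a) (h b) \<noteq> {}"
      using False box by blast
    ultimately have "measure lebesgue (h ` cbox a b) = (\<Prod>i\<in>UNIV. (b - a) $ Transposition.transpose m n i)"
      by (simp add: content_cbox_cart h_def)
    also have "\<dots> = (\<Prod>i\<in>UNIV. (b - a) $ i)"
      using prod.permute[OF permutes_swap_id, where S=UNIV and g="\<lambda>i. (b - a) $ i"]
      by (simp add: o_def)
    finally show ?thesis
      using False by (simp add: content_cbox_cart)
  qed simp
  then show ?thesis
    using measure_linear_sufficient[OF lin S, of 1] by simp
qed

text \<open>The library's \<open>measure_linear_image\<close> requires a \<open>wellorder\<close> index type, which it uses only to
  compute the determinant of a shear; \<open>det_matrix_shear\<close> removes that restriction.\<close>

proposition measure_linear_image_finite:
  fixes f :: "real^'n::finite \<Rightarrow> real^'n"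
  assumes "linear f" and "S \<in> lmeasurable"
  shows "f ` S \<in> lmeasurable \<and> measure lebesgue (f ` S) = \<bar>det (matrix f)\<bar> * measure lebesgue S"
proof -
  let ?P = "\<lambda>f. \<forall>S \<in> lmeasurable. f ` S \<in> lmeasurable \<and>
              measure lebesgue (f ` S) = \<bar>det (matrix f)\<bar> * measure lebesgue S"
  have "?P f"
  proof (rule induct_linear_elementary[OF \<open>linear f\<close>])
    fix f g :: "real^'n \<Rightarrow> real^'n"
    assume "linear f" "linear g" and f: "?P f" and g: "?P g"
    show "?P (f \<circ> g)"
    proof
      fix S :: "(real^'n) set"
      assume "S \<in> lmeasurable"
      moreover have "(f \<circ> g) ` S = f ` g ` S"
        by (simp add: image_comp)
      ultimately show "(f \<circ> g) ` S \<in> lmeasurable \<and>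
          measure lebesgue ((f \<circ> g) ` S) = \<bar>det (matrix (f \<circ> g))\<bar> * measure lebesgue S"
        using f g matrix_compose[OF \<open>linear g\<close> \<open>linear f\<close>]
        by (simp add: abs_mult det_mul)
    qed
  next
    fix f :: "real^'n \<Rightarrow> real^'n" and i
    assume "linear f" "\<And>x. f x $ i = 0"
    then have "\<not> inj f"
      by (metis (full_types) linear_injective_imp_surjective one_neq_zero surjE vec_component)
    then have "negligible (f ` S)" and "det (matrix f) = 0" for S
      using \<open>linear f\<close> det_nz_iff_inj negligible_linear_singular_image by blast+
    then show "?P f"
      by (simp add: negligible_imp_measurable negligible_imp_measure0)
  next
    show "?P (\<lambda>x. \<chi> i. c i * x $ i)" for c :: "'n \<Rightarrow> real"
      by (simp add: measurable_stretch measure_stretch matrix_def axis_def det_diagonal)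
  next
    fix m n :: 'n
    assume "m \<noteq> n"
    have "matrix (\<lambda>v::real^'n. \<chi> i. v $ Transposition.transpose m n i)
        = transpose (\<chi> i j. mat 1 $ i $ Transposition.transpose m n j)"
      by (auto simp: matrix_def transpose_def mat_def axis_def vec_eq_iff Transposition.transpose_def)
    then have "\<bar>det (matrix (\<lambda>v::real^'n. \<chi> i. v $ Transposition.transpose m n i))\<bar> = 1"
      by (simp add: det_permute_columns permutes_swap_id sign_swap_id)
    then show "?P (\<lambda>v. \<chi> i. v $ Transposition.transpose m n i)"
      by (simp add: measure_swap_coordinates_image)
  next
    fix m n :: 'n
    assume "m \<noteq> n"
    then show "?P (\<lambda>v. \<chi> i. if i = m then v $ m + v $ n else v $ i)"
      by (simp add: measure_shear_image det_matrix_shear)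
  qed
  then show ?thesis
    using assms(2) by blast
qed

definition int_span :: "'a::real_vector set \<Rightarrow> 'a set" where
  "int_span W = range (\<lambda>c. \<Sum>w\<in>W. of_int (c w) *\<^sub>R w)"

lemma int_span_sumI: "(\<Sum>w\<in>W. of_int (c w) *\<^sub>R w) \<in> int_span W"
  unfolding int_span_def by simp

lemma int_span_0: "0 \<in> int_span W"
  using int_span_sumI[where c="\<lambda>_. 0" and W=W] by simp

lemma int_span_diff:
  assumes "u \<in> int_span W" "v \<in> int_span W"
  shows "u - v \<in> int_span W"
proof -
  obtain c d where "u = (\<Sum>w\<in>W. of_int (c w) *\<^sub>R w)" "v = (\<Sum>w\<in>W. of_int (d w) *\<^sub>R w)"
    using assms unfolding int_span_def by blast
  then have "u - v = (\<Sum>w\<in>W. of_int (c w - d w) *\<^sub>R w)"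
    by (simp add: sum_subtractf scaleR_diff_left)
  then show ?thesis
    by (metis int_span_sumI)
qed

lemma int_span_uminus: "u \<in> int_span W \<Longrightarrow> - u \<in> int_span W"
  using int_span_diff[OF int_span_0] by simp

lemma int_span_superset:
  assumes "finite W" "w \<in> W"
  shows "w \<in> int_span W"
proof -
  have "w = (\<Sum>x\<in>W. of_int (if x = w then 1 else 0) *\<^sub>R x)"
    using assms by (simp add: if_distrib[of "\<lambda>t. of_int t *\<^sub>R _"] cong: if_cong)
  then show ?thesis
    by (metis int_span_sumI)
qed

lemma int_span_mono:
  assumes "finite W'" "W \<subseteq> W'"
  shows "int_span W \<subseteq> int_span W'"
proof
  fix v
  assume "v \<in> int_span W"
  then obtain c where v: "v = (\<Sum>w\<in>W. of_int (c w) *\<^sub>R w)"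
    unfolding int_span_def by blast
  have "v = (\<Sum>w\<in>W'. of_int (if w \<in> W then c w else 0) *\<^sub>R w)"
    unfolding v using assms by (intro sum.mono_neutral_cong_left) auto
  then show "v \<in> int_span W'"
    by (metis int_span_sumI)
qed

lemma int_span_image_uminus: "int_span W \<subseteq> int_span (uminus ` W)"
proof
  fix v
  assume "v \<in> int_span W"
  then obtain c where c: "v = (\<Sum>w\<in>W. of_int (c w) *\<^sub>R w)"
    unfolding int_span_def by blast
  have "v = (\<Sum>u\<in>uminus ` W. of_int (- c (- u)) *\<^sub>R u)"
    unfolding c by (subst sum.reindex) (auto simp: inj_on_def)
  then show "v \<in> int_span (uminus ` W)"
    by (metis int_span_sumI)
qed

lemma int_span_diffs_insert:
  fixes p :: "'b \<Rightarrow> 'a::real_vector"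
  assumes "p w - p x \<in> int_span S" "x \<in> V" "\<forall>k\<in>V. \<forall>k'\<in>V. p k - p k' \<in> int_span S"
  shows "\<forall>k\<in>insert w V. \<forall>k'\<in>insert w V. p k - p k' \<in> int_span S"
proof (intro ballI)
  have to_x: "p k - p x \<in> int_span S" if "k \<in> insert w V" for k
    using that assms by auto
  fix k k'
  assume "k \<in> insert w V" "k' \<in> insert w V"
  then have "(p k - p x) - (p k' - p x) \<in> int_span S"
    using int_span_diff to_x by blast
  then show "p k - p k' \<in> int_span S"
    by simp
qed

lemma det_Ints:
  fixes A :: "real^'n::finite^'n"
  assumes "\<And>i j. A $ i $ j \<in> \<int>"
  shows "det A \<in> \<int>"
  unfolding det_def using assms by (intro Ints_sum Ints_mult Ints_prod) auto

definition int_basis :: "(real^'n::finite) set \<Rightarrow> bool" where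
  "int_basis W \<longleftrightarrow> finite W \<and> card W = CARD('n) \<and> (\<forall>w\<in>W. \<forall>i. w $ i \<in> \<int>) \<and>
     (\<forall>k. axis k 1 \<in> int_span W)"

text \<open>An integer matrix whose columns span \<open>\<int>\<^sup>n\<close> over \<open>\<int>\<close> has an integer inverse, hence
  determinant \<open>\<plusminus>1\<close>; it maps the standard simplex onto the simplex spanned by its columns.\<close>

lemma measure_simplex_int_basis:
  fixes W :: "(real^'n::finite) set"
  assumes "int_basis W"
  shows "convex hull (insert 0 W) \<in> lmeasurable \<and>
         measure lebesgue (convex hull (insert 0 W)) = 1 / fact CARD('n)"
proof -
  have fin: "finite W" and card: "card W = CARD('n)" and ints: "\<And>w i. w \<in> W \<Longrightarrow> w $ i \<in> \<int>"
    and span: "\<And>k. axis k 1 \<in> int_span W"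
    using assms unfolding int_basis_def by auto
  obtain \<beta> where bij: "bij_betw \<beta> (UNIV::'n set) W"
    using finite_same_card_bij[of "UNIV::'n set" W] fin card by auto
  define M :: "real^'n^'n" where "M = (\<chi> i k. \<beta> k $ i)"
  have "\<forall>k. \<exists>c. axis k 1 = (\<Sum>w\<in>W. of_int (c w) *\<^sub>R w)"
    using span unfolding int_span_def by (simp add: image_iff)
  then obtain C where C: "\<And>k. axis k 1 = (\<Sum>w\<in>W. of_int (C k w) *\<^sub>R w)"
    by metis
  define N :: "real^'n^'n" where "N = (\<chi> j k. of_int (C k (\<beta> j)))"
  have "(M ** N) $ i $ k = mat 1 $ i $ k" for i k
  proof -
    have "(M ** N) $ i $ k = (\<Sum>j\<in>UNIV. of_int (C k (\<beta> j)) *\<^sub>R \<beta> j) $ i"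
      by (simp add: matrix_matrix_mult_def M_def N_def mult.commute)
    also have "(\<Sum>j\<in>UNIV. of_int (C k (\<beta> j)) *\<^sub>R \<beta> j) = axis k 1"
      using sum.reindex_bij_betw[OF bij, of "\<lambda>w. of_int (C k w) *\<^sub>R w"] C by simp
    finally show ?thesis
      by (simp add: mat_def axis_def)
  qed
  then have "M ** N = mat 1"
    by (simp add: vec_eq_iff)
  then have "det M * det N = 1"
    by (metis det_I det_mul)
  moreover obtain x y where xy: "det M = of_int x" "det N = of_int y"
    using det_Ints[of M] det_Ints[of N] ints bij
    by (auto simp: M_def N_def bij_betw_def elim!: Ints_cases)
  ultimately have "x * y = 1"
    by (metis of_int_1 of_int_eq_iff of_int_mult)
  then have "\<bar>det M\<bar> = 1"
    using xy by (auto simp: zmult_eq_1_iff)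
  have lin: "linear ((*v) M)"
    by simp
  have "(*v) M ` Basis = W"
  proof -
    have Basis: "Basis = range (\<lambda>k::'n. axis k (1::real))"
      by (auto simp: Basis_vec_def)
    have column: "M *v axis k 1 = \<beta> k" for k
      by (simp add: matrix_vector_mult_basis column_def M_def vec_eq_iff)
    have "(*v) M ` Basis = range \<beta>"
      unfolding Basis image_image column by (rule refl)
    then show ?thesis
      using bij by (simp add: bij_betw_def)
  qed
  then have image: "(*v) M ` (convex hull (insert 0 Basis)) = convex hull (insert 0 W)"
    using convex_hull_linear_image[OF lin] by (simp add: linear_0[OF lin])
  have "convex hull (insert 0 Basis :: (real^'n) set) \<in> lmeasurable \<and>
      measure lebesgue (convex hull (insert 0 Basis :: (real^'n) set)) = 1 / fact CARD('n)"
  proof -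
    have "compact (convex hull (insert 0 Basis :: (real^'n) set))"
      by (intro finite_imp_compact_convex_hull) auto
    then show ?thesis
      using content_std_simplex[where 'a="real^'n"]
      by (auto simp: lmeasurable_compact dest: compact_imp_closed)
  qed
  then show ?thesis
    using measure_linear_image_finite[OF lin] \<open>\<bar>det M\<bar> = 1\<close>
    unfolding image[symmetric] by simp
qed

definition open_cone :: "'a::real_vector set \<Rightarrow> 'a set" where
  "open_cone W = {(\<Sum>w\<in>W. c w *\<^sub>R w) | c. \<forall>w\<in>W. 0 < c w}"

text \<open>A point of the simplex with a vanishing barycentric coordinate lies in the span of the
  remaining vectors, a hyperplane.\<close>

lemma simplex_subset_negligible_Un_open_cone:
  fixes W :: "'a::euclidean_space set"
  assumes fin: "finite W" and card: "card W \<le> DIM('a)"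
  obtains N where "negligible N" "convex hull (insert 0 W) \<subseteq> N \<union> open_cone W"
proof
  show "negligible (\<Union>w\<in>W. span (W - {w}))"
  proof (rule negligible_Union)
    fix T
    assume "T \<in> (\<lambda>w. span (W - {w})) ` W"
    then obtain w where w: "w \<in> W" "T = span (W - {w})"
      by blast
    have "dim (span (W - {w})) \<le> card (W - {w})"
      using dim_le_card[of "W - {w}" "W - {w}"] fin by (simp add: span_superset)
    also have "\<dots> < DIM('a)"
      using card_Diff1_less[OF fin w(1)] card by linarith
    finally show "negligible T"
      using w by (intro negligible_lowdim) simp
  qed (use fin in simp)
  show "convex hull (insert 0 W) \<subseteq> (\<Union>w\<in>W. span (W - {w})) \<union> open_cone W"
  proof
    fix x
    assume "x \<in> convex hull (insert 0 W)"
    then obtain u where u: "\<forall>y\<in>insert 0 W. 0 \<le> u y" "x = (\<Sum>y\<in>insert 0 W. u y *\<^sub>R y)"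
      using convex_hull_finite[of "insert 0 W"] fin by auto
    have x: "x = (\<Sum>y\<in>W. u y *\<^sub>R y)"
      using u(2) fin by (cases "0 \<in> W") (simp_all add: insert_absorb)
    show "x \<in> (\<Union>w\<in>W. span (W - {w})) \<union> open_cone W"
    proof (cases "\<forall>w\<in>W. 0 < u w")
      case True
      then show ?thesis
        unfolding open_cone_def x by blast
    next
      case False
      then obtain w where w: "w \<in> W" "u w = 0"
        using u(1) less_eq_real_def by auto
      have "x = (\<Sum>y\<in>W - {w}. u y *\<^sub>R y)"
        using x w fin by (simp add: sum.remove)
      also have "\<dots> \<in> span (W - {w})"
        by (intro span_sum span_mul span_base) auto
      finally show ?thesis
        using w by blast
    qed
  qed
qed

lemma measure_UN_simplices_int_basis:
  fixes W :: "'a \<Rightarrow> (real^'n::finite) set"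
  assumes fin: "finite \<T>" and int_basis: "\<And>T. T \<in> \<T> \<Longrightarrow> int_basis (W T)"
    and disjoint: "\<And>T T'. T \<in> \<T> \<Longrightarrow> T' \<in> \<T> \<Longrightarrow> open_cone (W T) \<inter> open_cone (W T') \<noteq> {} \<Longrightarrow> T = T'"
  shows "measure lborel (\<Union>T\<in>\<T>. convex hull (insert 0 (W T))) = card \<T> / fact CARD('n)"
proof -
  let ?S = "\<lambda>T. convex hull (insert 0 (W T))"
  have simplex: "?S T \<in> lmeasurable \<and> measure lebesgue (?S T) = 1 / fact CARD('n)" if "T \<in> \<T>" for T
    using measure_simplex_int_basis int_basis[OF that] by blast
  have pairwise_negligible: "pairwise (\<lambda>T T'. negligible (?S T \<inter> ?S T')) \<T>"
  proof (rule pairwiseI)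
    fix T T'
    assume TT': "T \<in> \<T>" "T' \<in> \<T>" "T \<noteq> T'"
    have bound: "finite (W T)" "card (W T) \<le> DIM(real^'n)" if "T \<in> \<T>" for T
      using int_basis[OF that] by (simp_all add: int_basis_def)
    obtain N where N: "negligible N" "?S T \<subseteq> N \<union> open_cone (W T)"
      by (rule simplex_subset_negligible_Un_open_cone[OF bound[OF TT'(1)]])
    obtain N' where N': "negligible N'" "?S T' \<subseteq> N' \<union> open_cone (W T')"
      by (rule simplex_subset_negligible_Un_open_cone[OF bound[OF TT'(2)]])
    have "open_cone (W T) \<inter> open_cone (W T') = {}"
      using disjoint[OF TT'(1,2)] TT'(3) by blast
    then have "?S T \<inter> ?S T' \<subseteq> N \<union> N'"
      using N(2) N'(2) by blast
    then show "negligible (?S T \<inter> ?S T')"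
      using N(1) N'(1) negligible_Un negligible_subset by blast
  qed
  have "measure lebesgue (\<Union>T\<in>\<T>. ?S T) = (\<Sum>T\<in>\<T>. measure lebesgue (?S T))"
    using simplex by (intro measure_negligible_finite_Union_image[OF fin _ pairwise_negligible]) simp
  also have "\<dots> = (\<Sum>T\<in>\<T>. 1 / fact CARD('n))"
    using simplex by (intro sum.cong) simp_all
  also have "\<dots> = card \<T> / fact CARD('n)"
    by simp
  finally have "measure lebesgue (\<Union>T\<in>\<T>. ?S T) = card \<T> / fact CARD('n)" .
  moreover have "(\<Union>T\<in>\<T>. ?S T) \<in> sets lborel"
  proof -
    have "compact (\<Union>T\<in>\<T>. ?S T)"
      using fin int_basis by (intro compact_UN finite_imp_compact_convex_hull) (auto simp: int_basis_def)
    then show ?thesis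
      by (simp add: compact_imp_closed)
  qed
  ultimately show ?thesis
    by simp
qed

section \<open>Vanishing of \<open>Ext\<^sup>1\<close> between interval modules\<close>

text \<open>Both lemmas test surjectivity of Ringel's map on the indicator \<open>g\<close> of one arrow \<open>r\<close>.\<close>

lemma ext1_nonzero_at_arrow:
  assumes "r \<in> {1..<n}" "asrc orient r \<in> isupp X" "atgt orient r \<in> isupp Y"
    "asrc orient r \<notin> isupp Y" "atgt orient r \<notin> isupp X"
  shows "\<not> ext1_zero TYPE('k::field) orient n X Y"
proof
  assume e: "ext1_zero TYPE('k) orient n X Y"
  obtain f :: "nat \<Rightarrow> 'k" where f:
    "\<forall>v. v \<notin> {1..n} \<inter> isupp X \<inter> isupp Y \<longrightarrow> f v = 0"
    "\<forall>i\<in>{1..<n}. asrc orient i \<in> isupp X \<and> atgt orient i \<in> isupp Y \<longrightarrow>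
        (if i = r then 1 else 0) = f (asrc orient i) - f (atgt orient i)"
    using spec[OF e[unfolded ext1_zero_def], of "\<lambda>i. if i = r then 1 else 0"] by blast
  then have "(1::'k) = f (asrc orient r) - f (atgt orient r)"
    using assms(1-3) by auto
  moreover have "f (asrc orient r) = 0" "f (atgt orient r) = 0"
    using f(1) assms(4,5) by auto
  ultimately show False
    by simp
qed

text \<open>Here \<open>f\<close> is constant along the path \<open>c..d\<close> inside the common support, while the arrow \<open>r\<close>
  forces \<open>f c = \<plusminus>1\<close> and the arrow \<open>s\<close> forces \<open>f d = 0\<close>.\<close>

lemma ext1_nonzero_along_path:
  assumes cd: "1 \<le> c" "c \<le> d" "d \<le> n" and sub: "{c..d} \<subseteq> isupp A \<inter> isupp B"
    and r: "r \<in> {1..<n}" "asrc orient r \<in> isupp A" "atgt orient r \<in> isupp B"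
    and s: "s \<in> {1..<n}" "asrc orient s \<in> isupp A" "atgt orient s \<in> isupp B"
    and "r \<noteq> s"
    and rc: "(asrc orient r = c \<and> atgt orient r \<notin> isupp A \<inter> isupp B) \<or>
             (atgt orient r = c \<and> asrc orient r \<notin> isupp A \<inter> isupp B)"
    and sd: "(asrc orient s = d \<and> atgt orient s \<notin> isupp A \<inter> isupp B) \<or>
             (atgt orient s = d \<and> asrc orient s \<notin> isupp A \<inter> isupp B)"
  shows "\<not> ext1_zero TYPE('k::field) orient n A B"
proof
  assume e: "ext1_zero TYPE('k) orient n A B"
  obtain f :: "nat \<Rightarrow> 'k" where f:
    "\<forall>v. v \<notin> {1..n} \<inter> isupp A \<inter> isupp B \<longrightarrow> f v = 0"
    "\<forall>i\<in>{1..<n}. asrc orient i \<in> isupp A \<and> atgt orient i \<in> isupp B \<longrightarrow>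
        (if i = r then 1 else 0) = f (asrc orient i) - f (atgt orient i)"
    using spec[OF e[unfolded ext1_zero_def], of "\<lambda>i. if i = r then 1 else 0"] by blast
  have step: "f i = f (Suc i)" if "c \<le> i" "i < d" for i
  proof -
    have ends: "asrc orient i \<in> {c..d}" "atgt orient i \<in> {c..d}"
      using that by (auto simp: asrc_def atgt_def)
    then have "i \<noteq> r"
      using rc sub by auto
    then have "f (asrc orient i) = f (atgt orient i)"
      using f(2) ends sub that cd by force
    then show ?thesis
      by (auto simp: asrc_def atgt_def split: if_splits)
  qed
  have "f c = f d"
    using cd(2) by (induction d rule: dec_induct) (use step in auto)
  moreover have "f c = 1 \<or> f c = -1"
  proof -
    have r1: "(1::'k) = f (asrc orient r) - f (atgt orient r)"
      using f(2) r by auto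
    show ?thesis
    proof (cases "asrc orient r = c \<and> atgt orient r \<notin> isupp A \<inter> isupp B")
      case True
      then show ?thesis
        using r1 f(1) by auto
    next
      case False
      then have "atgt orient r = c" "f (asrc orient r) = 0"
        using rc f(1) by auto
      then show ?thesis
        using r1 by (simp add: minus_equation_iff)
    qed
  qed
  moreover have "f d = 0"
    using f s \<open>r \<noteq> s\<close> sd by force
  ultimately show False
    by auto
qed

lemma ext1_zero_not_adjacent:
  assumes X: "X \<in> intervals n" and Y: "Y \<in> intervals n"
    and e1: "ext1_zero TYPE('k::field) orient n X Y" and e2: "ext1_zero TYPE('k) orient n Y X"
  shows "Suc (snd X) \<noteq> fst Y"
proof
  assume adj: "Suc (snd X) = fst Y"
  obtain a b c d where ab: "X = (a,b)" "1 \<le> a" "a \<le> b" "b \<le> n"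
    and cd: "Y = (c,d)" "1 \<le> c" "c \<le> d" "d \<le> n"
    using X Y unfolding intervals_def by auto
  have r: "b \<in> {1..<n}"
    using ab cd adj by auto
  show False
  proof (cases "orient b")
    case True
    have "\<not> ext1_zero TYPE('k) orient n X Y"
      by (rule ext1_nonzero_at_arrow[OF r])
        (use True ab cd adj in \<open>auto simp: asrc_def atgt_def isupp_def\<close>)
    then show False
      using e1 by simp
  next
    case False
    have "\<not> ext1_zero TYPE('k) orient n Y X"
      by (rule ext1_nonzero_at_arrow[OF r])
        (use False ab cd adj in \<open>auto simp: asrc_def atgt_def isupp_def\<close>)
    then show False
      using e2 by simp
  qed
qed

lemma ext1_zero_nested:
  assumes X: "X \<in> intervals n" and Y: "Y \<in> intervals n"
    and nested: "fst X < fst Y" "snd Y < snd X"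
    and e1: "ext1_zero TYPE('k::field) orient n X Y" and e2: "ext1_zero TYPE('k) orient n Y X"
  shows "orient (fst Y - 1) = orient (snd Y)"
proof (rule ccontr)
  assume ne: "orient (fst Y - 1) \<noteq> orient (snd Y)"
  obtain a b c d where ab: "X = (a,b)" "1 \<le> a" "a \<le> b" "b \<le> n"
    and cd: "Y = (c,d)" "1 \<le> c" "c \<le> d" "d \<le> n"
    using X Y unfolding intervals_def by auto
  have r: "c - 1 \<in> {1..<n}" and s: "d \<in> {1..<n}" and rs: "c - 1 \<noteq> d"
    using ab cd nested by auto
  have sub: "{c..d} \<subseteq> isupp X \<inter> isupp Y" "{c..d} \<subseteq> isupp Y \<inter> isupp X"
    using ab cd nested by (auto simp: isupp_def)
  show False
  proof (cases "orient (c - 1)")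
    case True
    have "\<not> ext1_zero TYPE('k) orient n X Y"
      by (rule ext1_nonzero_along_path[OF cd(2,3,4) sub(1) r _ _ s _ _ rs])
        (use True ne ab cd nested in \<open>auto simp: asrc_def atgt_def isupp_def\<close>)
    then show False
      using e1 by simp
  next
    case False
    have "\<not> ext1_zero TYPE('k) orient n Y X"
      by (rule ext1_nonzero_along_path[OF cd(2,3,4) sub(2) r _ _ s _ _ rs])
        (use False ne ab cd nested in \<open>auto simp: asrc_def atgt_def isupp_def\<close>)
    then show False
      using e2 by simp
  qed
qed

lemma ext1_zero_overlapping:
  assumes X: "X \<in> intervals n" and Y: "Y \<in> intervals n"
    and overlap: "fst X < fst Y" "fst Y \<le> snd X" "snd X < snd Y"
    and e1: "ext1_zero TYPE('k::field) orient n X Y" and e2: "ext1_zero TYPE('k) orient n Y X"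
  shows "orient (fst Y - 1) \<noteq> orient (snd X)"
proof
  assume eq: "orient (fst Y - 1) = orient (snd X)"
  obtain a b c d where ab: "X = (a,b)" "1 \<le> a" "a \<le> b" "b \<le> n"
    and cd: "Y = (c,d)" "1 \<le> c" "c \<le> d" "d \<le> n"
    using X Y unfolding intervals_def by auto
  have r: "c - 1 \<in> {1..<n}" and s: "b \<in> {1..<n}" and rs: "c - 1 \<noteq> b"
    and cb: "1 \<le> c" "c \<le> b" "b \<le> n"
    using ab cd overlap by auto
  have sub: "{c..b} \<subseteq> isupp X \<inter> isupp Y" "{c..b} \<subseteq> isupp Y \<inter> isupp X"
    using ab cd overlap by (auto simp: isupp_def)
  show False
  proof (cases "orient (c - 1)")
    case True
    have "\<not> ext1_zero TYPE('k) orient n X Y"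
      by (rule ext1_nonzero_along_path[OF cb sub(1) r _ _ s _ _ rs])
        (use True eq ab cd overlap in \<open>auto simp: asrc_def atgt_def isupp_def\<close>)
    then show False
      using e1 by simp
  next
    case False
    have "\<not> ext1_zero TYPE('k) orient n Y X"
      by (rule ext1_nonzero_along_path[OF cb sub(2) r _ _ s _ _ rs])
        (use False eq ab cd overlap in \<open>auto simp: asrc_def atgt_def isupp_def\<close>)
    then show False
      using e2 by simp
  qed
qed

text \<open>The combinatorial consequences of \<open>Ext\<^sup>1(T, T) = 0\<close> that the volume computation needs.\<close>

definition ext_compatible :: "(nat \<Rightarrow> bool) \<Rightarrow> interval set \<Rightarrow> bool" where
  "ext_compatible orient F \<longleftrightarrow> (\<forall>X\<in>F. \<forall>Y\<in>F.
     Suc (snd X) \<noteq> fst Y \<and>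
     (fst X < fst Y \<and> snd Y < snd X \<longrightarrow> orient (fst Y - 1) = orient (snd Y)) \<and>
     (fst X < fst Y \<and> fst Y \<le> snd X \<and> snd X < snd Y \<longrightarrow> orient (fst Y - 1) \<noteq> orient (snd X)))"

lemma ext_compatibleD:
  assumes "ext_compatible orient F" "X \<in> F" "Y \<in> F"
  shows "Suc (snd X) \<noteq> fst Y"
    and "fst X < fst Y \<Longrightarrow> snd Y < snd X \<Longrightarrow> orient (fst Y - 1) = orient (snd Y)"
    and "fst X < fst Y \<Longrightarrow> fst Y \<le> snd X \<Longrightarrow> snd X < snd Y \<Longrightarrow> orient (fst Y - 1) \<noteq> orient (snd X)"
  using assms unfolding ext_compatible_def by blast+

lemma ext_compatible_subset: "ext_compatible orient F \<Longrightarrow> G \<subseteq> F \<Longrightarrow> ext_compatible orient G"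
  unfolding ext_compatible_def by blast

lemma ext_compatible_if_ext1_zero:
  assumes "T \<subseteq> intervals n" "\<forall>X\<in>T. \<forall>Y\<in>T. ext1_zero TYPE('k::field) orient n X Y"
  shows "ext_compatible orient T"
  unfolding ext_compatible_def
proof (intro ballI conjI impI)
  fix X Y
  assume "X \<in> T" "Y \<in> T"
  then have I: "X \<in> intervals n" "Y \<in> intervals n"
    and e: "ext1_zero TYPE('k) orient n X Y" "ext1_zero TYPE('k) orient n Y X"
    using assms by auto
  show "Suc (snd X) \<noteq> fst Y"
    using ext1_zero_not_adjacent[OF I e] .
  show "orient (fst Y - 1) = orient (snd Y)" if "fst X < fst Y \<and> snd Y < snd X"
    using ext1_zero_nested[OF I _ _ e] that by blast
  show "orient (fst Y - 1) \<noteq> orient (snd X)" if "fst X < fst Y \<and> fst Y \<le> snd X \<and> snd X < snd Y"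
    using ext1_zero_overlapping[OF I _ _ _ e] that by blast
qed

section \<open>Compatible families are forests\<close>

text \<open>The interval \<open>[i, j]\<close> is read as the edge \<open>{i - 1, j}\<close> of a graph on \<open>{0..n}\<close>; its dimension
  vector is then the difference of the prefix sums at the two ends.\<close>

definition incident :: "nat \<Rightarrow> interval \<Rightarrow> bool" where
  "incident w X \<longleftrightarrow> fst X = Suc w \<or> snd X = w"

lemma ext_compatible_leaf_of_two_starts:
  assumes compat: "ext_compatible orient F" and F: "F \<subseteq> intervals n"
    and max: "\<forall>X\<in>F. fst X \<le> A" and q: "(A, q1) \<in> F" "(A, q2) \<in> F" "q1 < q2"
  shows "\<exists>q\<in>{q1, q2}. \<forall>Y\<in>F. incident q Y \<longrightarrow> Y = (A, q)"
proof (rule ccontr)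
  have other_end: "fst Y < A \<and> snd Y = q" if "q \<in> {q1, q2}" "Y \<in> F" "incident q Y" "Y \<noteq> (A, q)" for q Y
  proof -
    have "A \<le> q"
      using that(1) q F unfolding intervals_def by auto
    then have "snd Y = q"
      using that(3) max that(2) unfolding incident_def by fastforce
    then show ?thesis
      using that(2,4) max by (metis le_neq_implies_less prod.collapse)
  qed
  assume "\<not> ?thesis"
  then obtain Y1 Y2 where Y1: "Y1 \<in> F" "fst Y1 < A" "snd Y1 = q1"
    and Y2: "Y2 \<in> F" "fst Y2 < A" "snd Y2 = q2"
    using other_end by (metis insertCI)
  have "A \<le> q1"
    using q F unfolding intervals_def by auto
  then have "orient (A - 1) \<noteq> orient q1"
    using ext_compatibleD(3)[OF compat Y1(1) q(2)] Y1 q(3) by simp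
  moreover have "orient (A - 1) = orient q1"
    using ext_compatibleD(2)[OF compat Y2(1) q(1)] Y2 q(3) by simp
  ultimately show False
    by simp
qed

lemma ext_compatible_has_leaf:
  assumes fin: "finite F" and ne: "F \<noteq> {}" and F: "F \<subseteq> intervals n"
    and compat: "ext_compatible orient F"
  obtains w X where "X \<in> F" "incident w X" "\<forall>Y\<in>F. incident w Y \<longrightarrow> Y = X"
proof -
  define A where "A = Max (fst ` F)"
  have max: "\<forall>X\<in>F. fst X \<le> A"
    unfolding A_def using fin by auto
  have "A \<in> fst ` F"
    unfolding A_def using fin ne by simp
  then obtain q0 where X0: "(A, q0) \<in> F"
    by force
  have A1: "1 \<le> A"
    using X0 F unfolding intervals_def by auto
  show ?thesis
  proof (cases "\<exists>q1. q1 \<noteq> q0 \<and> (A, q1) \<in> F")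
    case True
    then obtain q1 where q1: "q1 \<noteq> q0" "(A, q1) \<in> F"
      by blast
    have "\<exists>q\<in>{q0, q1}. \<forall>Y\<in>F. incident q Y \<longrightarrow> Y = (A, q)"
    proof (cases "q0 < q1")
      case True
      then show ?thesis
        using ext_compatible_leaf_of_two_starts[OF compat F max X0 q1(2)] by blast
    next
      case False
      then have "q1 < q0"
        using q1(1) by simp
      then show ?thesis
        using ext_compatible_leaf_of_two_starts[OF compat F max q1(2) X0] by blast
    qed
    then obtain q where "(A, q) \<in> F" "\<forall>Y\<in>F. incident q Y \<longrightarrow> Y = (A, q)"
      using X0 q1(2) by blast
    moreover have "incident q (A, q)"
      by (simp add: incident_def)
    ultimately show ?thesis
      using that by blast
  next
    case False
    have "Y = (A, q0)" if "Y \<in> F" "incident (A - 1) Y" for Y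
    proof (cases "fst Y = A")
      case True
      then show ?thesis
        using False that(1) prod.collapse[of Y] by metis
    next
      case False
      then have "Suc (snd Y) = fst (A, q0)"
        using that(2) A1 unfolding incident_def by auto
      then show ?thesis
        using ext_compatibleD(1)[OF compat that(1) X0] by blast
    qed
    moreover have "incident (A - 1) (A, q0)"
      using A1 by (simp add: incident_def)
    ultimately show ?thesis
      using that X0 by blast
  qed
qed

definition prefix_sum :: "(nat \<Rightarrow> 'n::finite) \<Rightarrow> nat \<Rightarrow> real^'n" where
  "prefix_sum e k = (\<Sum>j\<in>{1..k}. axis (e j) 1)"

lemma dimv_eq_prefix_sum_diff:
  assumes "1 \<le> fst X" "fst X \<le> snd X"
  shows "dimv e X = prefix_sum e (snd X) - prefix_sum e (fst X - 1)"
proof -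
  have "{1..snd X} = {1..fst X - 1} \<union> {fst X..snd X}" "{1..fst X - 1} \<inter> {fst X..snd X} = {}"
    using assms by auto
  then have "prefix_sum e (snd X) = prefix_sum e (fst X - 1) + dimv e X"
    unfolding prefix_sum_def dimv_def isupp_def by (simp add: sum.union_disjoint)
  then show ?thesis
    by simp
qed

lemma dimv_singleton: "dimv e (j, j) = axis (e j) 1"
  by (simp add: dimv_def isupp_def)

lemma intervals_finite: "finite (intervals n)"
proof -
  have "intervals n \<subseteq> {1..n} \<times> {1..n}"
    unfolding intervals_def by auto
  then show ?thesis
    by (rule finite_subset) simp
qed

text \<open>Leaf removal: a compatible family is a forest on the vertices \<open>V\<close> it touches, and when
  it has \<open>card V - 1\<close> edges it is a spanning tree, along whose paths prefix sums telescope.\<close>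

lemma ext_compatible_forest:
  fixes e :: "nat \<Rightarrow> 'n::finite"
  assumes "finite F" "F \<subseteq> intervals n" "ext_compatible orient F" "finite V" "V \<noteq> {}"
    "\<forall>X\<in>F. fst X - 1 \<in> V \<and> snd X \<in> V"
  shows "card F + 1 \<le> card V \<and>
    (card F + 1 = card V \<longrightarrow> (\<forall>k\<in>V. \<forall>k'\<in>V. prefix_sum e k - prefix_sum e k' \<in> int_span (dimv e ` F)))"
  using assms
proof (induction "card F" arbitrary: F V rule: less_induct)
  case less
  show ?case
  proof (cases "F = {}")
    case True
    have "card V \<ge> 1"
      using less.prems(4,5) by (simp add: Suc_leI card_gt_0_iff)
    moreover have "prefix_sum e k - prefix_sum e k' \<in> int_span (dimv e ` F)"
      if "card V = 1" "k \<in> V" "k' \<in> V" for k k'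
      using that int_span_0 by (metis card_1_singletonE diff_self singletonD)
    ultimately show ?thesis
      using True by auto
  next
    case False
    obtain w X where X: "X \<in> F" "incident w X" and leaf: "\<forall>Y\<in>F. incident w Y \<longrightarrow> Y = X"
      by (rule ext_compatible_has_leaf[OF less.prems(1) False less.prems(2,3)])
    have ivX: "1 \<le> fst X" "fst X \<le> snd X"
      using X less.prems(2) unfolding intervals_def by auto
    define x where "x = (if fst X = Suc w then snd X else fst X - 1)"
    have ends: "fst X - 1 \<in> V" "snd X \<in> V"
      using less.prems(6) X(1) by auto
    then have wV: "w \<in> V"
      using X(2) unfolding incident_def by auto
    have xV: "x \<in> V"
      unfolding x_def using ends by simp
    have xw: "x \<noteq> w"
      using X(2) ivX unfolding x_def incident_def by auto
    define F' where "F' = F - {X}"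
    define V' where "V' = V - {w}"
    have cF: "card F = Suc (card F')"
      unfolding F'_def using card.remove[OF less.prems(1) X(1)] .
    have cV: "card V = Suc (card V')"
      unfolding V'_def using card.remove[OF less.prems(4) wV] .
    have "\<forall>Y\<in>F'. fst Y - 1 \<in> V' \<and> snd Y \<in> V'"
    proof
      fix Y
      assume Y: "Y \<in> F'"
      then have "Y \<in> F" "Y \<noteq> X" "1 \<le> fst Y"
        using less.prems(2) unfolding F'_def intervals_def by auto
      then show "fst Y - 1 \<in> V' \<and> snd Y \<in> V'"
        using leaf less.prems(6) unfolding V'_def incident_def by auto
    qed
    then have IH: "card F' + 1 \<le> card V' \<and> (card F' + 1 = card V' \<longrightarrow>
        (\<forall>k\<in>V'. \<forall>k'\<in>V'. prefix_sum e k - prefix_sum e k' \<in> int_span (dimv e ` F')))"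
      using less.hyps[of F' V'] cF less.prems xV xw
      unfolding F'_def V'_def by (auto intro: ext_compatible_subset)
    have "\<forall>k\<in>V. \<forall>k'\<in>V. prefix_sum e k - prefix_sum e k' \<in> int_span (dimv e ` F)"
      if eq: "card F + 1 = card V"
    proof -
      let ?D = "int_span (dimv e ` F)"
      have dX: "dimv e X \<in> ?D"
        using X less.prems(1) by (intro int_span_superset) auto
      have wx: "prefix_sum e w - prefix_sum e x \<in> ?D"
      proof (cases "fst X = Suc w")
        case True
        then have "prefix_sum e w - prefix_sum e x = - dimv e X"
          using dimv_eq_prefix_sum_diff[OF ivX, of e] unfolding x_def by simp
        then show ?thesis
          using int_span_uminus[OF dX] by simp
      next
        case False
        then have "prefix_sum e w - prefix_sum e x = dimv e X"
          using dimv_eq_prefix_sum_diff[OF ivX, of e] X(2) unfolding x_def incident_def by simp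
        then show ?thesis
          using dX by simp
      qed
      have "int_span (dimv e ` F') \<subseteq> ?D"
        using less.prems(1) by (intro int_span_mono) (auto simp: F'_def)
      then have "\<forall>k\<in>V'. \<forall>k'\<in>V'. prefix_sum e k - prefix_sum e k' \<in> ?D"
        using IH eq cF cV by auto
      moreover have "x \<in> V'" "V = insert w V'"
        using xV xw wV unfolding V'_def by auto
      ultimately show ?thesis
        using int_span_diffs_insert[where p = "prefix_sum e", OF wx] by simp
    qed
    then show ?thesis
      using IH cF cV by simp
  qed
qed

lemma ext_compatible_card_bound_interval:
  fixes e :: "nat \<Rightarrow> 'n::finite"
  assumes T: "T \<subseteq> intervals n" "ext_compatible orient T" "\<forall>X\<in>T. isupp X \<subseteq> {u..m}"
    and um: "1 \<le> u" "u \<le> m"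
  shows "card T \<le> card {u..m} \<and>
    (card T = card {u..m} \<longrightarrow> (\<forall>i\<in>{u..m}. axis (e i) 1 \<in> int_span (dimv e ` T)))"
proof -
  have finT: "finite T"
    using T(1) intervals_finite finite_subset by blast
  have cV: "card {u - 1..m} = card {u..m} + 1"
    using um by simp
  have ends: "\<forall>X\<in>T. fst X - 1 \<in> {u - 1..m} \<and> snd X \<in> {u - 1..m}"
  proof
    fix X
    assume X: "X \<in> T"
    then have "fst X \<le> snd X"
      using T(1) by (auto simp: intervals_def)
    then have "fst X \<in> isupp X" "snd X \<in> isupp X"
      by (auto simp: isupp_def)
    then have "fst X \<in> {u..m}" "snd X \<in> {u..m}"
      using T(3) X by blast+
    then show "fst X - 1 \<in> {u - 1..m} \<and> snd X \<in> {u - 1..m}"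
      by auto
  qed
  have "{u - 1..m} \<noteq> {}"
    using um by simp
  then have forest: "card T + 1 \<le> card {u - 1..m} \<and> (card T + 1 = card {u - 1..m} \<longrightarrow>
      (\<forall>k\<in>{u - 1..m}. \<forall>k'\<in>{u - 1..m}. prefix_sum e k - prefix_sum e k' \<in> int_span (dimv e ` T)))"
    using ext_compatible_forest[OF finT T(1,2) finite_atLeastAtMost _ ends] by blast
  have "axis (e i) 1 \<in> int_span (dimv e ` T)" if "card T = card {u..m}" "i \<in> {u..m}" for i
  proof -
    have "axis (e i) 1 = prefix_sum e i - prefix_sum e (i - 1)"
      using dimv_eq_prefix_sum_diff[of "(i, i)" e] dimv_singleton[of e i] that(2) um by simp
    moreover have "i \<in> {u - 1..m}" "i - 1 \<in> {u - 1..m}"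
      using that(2) by auto
    ultimately show ?thesis
      using forest cV that(1) by simp
  qed
  then show ?thesis
    using forest cV by simp
qed

lemma card_bound_Un:
  assumes "finite T" "finite I" "T = TL \<union> TR" "TL \<inter> TR = {}" "I = IL \<union> IR" "IL \<inter> IR = {}"
    and L: "card TL \<le> card IL \<and> (card TL = card IL \<longrightarrow> (\<forall>i\<in>IL. v i \<in> int_span (f ` TL)))"
    and R: "card TR \<le> card IR \<and> (card TR = card IR \<longrightarrow> (\<forall>i\<in>IR. v i \<in> int_span (f ` TR)))"
  shows "card T \<le> card I \<and> (card T = card I \<longrightarrow> (\<forall>i\<in>I. v i \<in> int_span (f ` T)))"
proof -
  have cards: "card T = card TL + card TR" "card I = card IL + card IR"
    using assms(1-6) by (simp_all add: card_Un_disjoint)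
  have "v i \<in> int_span (f ` T)" if "card T = card I" "i \<in> I" for i
  proof -
    have "int_span (f ` TL) \<subseteq> int_span (f ` T)"
      using assms(1) by (intro int_span_mono) (auto simp: assms(3))
    moreover have "int_span (f ` TR) \<subseteq> int_span (f ` T)"
      using assms(1) by (intro int_span_mono) (auto simp: assms(3))
    moreover have "card TL = card IL" "card TR = card IR"
      using L R cards that(1) by linarith+
    ultimately show ?thesis
      using L R assms(5) that(2) by blast
  qed
  then show ?thesis
    using L R cards by simp
qed

lemma intervals_split_at_gap:
  assumes "T \<subseteq> intervals n" "\<forall>X\<in>T. isupp X \<subseteq> I" "g \<notin> I"
  shows "T = {X\<in>T. snd X < g} \<union> {X\<in>T. g < fst X}" "{X\<in>T. snd X < g} \<inter> {X\<in>T. g < fst X} = {}"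
    and "\<forall>X\<in>{X\<in>T. snd X < g}. isupp X \<subseteq> {i\<in>I. i < g}"
    and "\<forall>X\<in>{X\<in>T. g < fst X}. isupp X \<subseteq> {i\<in>I. g < i}"
proof -
  have side: "snd X < g \<or> g < fst X" if "X \<in> T" for X
    using that assms(2,3) unfolding isupp_def by (meson atLeastAtMost_iff not_le subsetD)
  have le: "fst X \<le> snd X" if "X \<in> T" for X
    using that assms(1) by (auto simp: intervals_def)
  show "T = {X\<in>T. snd X < g} \<union> {X\<in>T. g < fst X}" "{X\<in>T. snd X < g} \<inter> {X\<in>T. g < fst X} = {}"
    using side by (auto dest: le)
  show "\<forall>X\<in>{X\<in>T. snd X < g}. isupp X \<subseteq> {i\<in>I. i < g}"
  proof
    fix X
    assume "X \<in> {X\<in>T. snd X < g}"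
    then have "isupp X \<subseteq> I" "snd X < g"
      using assms(2) by auto
    then show "isupp X \<subseteq> {i\<in>I. i < g}"
      unfolding isupp_def by fastforce
  qed
  show "\<forall>X\<in>{X\<in>T. g < fst X}. isupp X \<subseteq> {i\<in>I. g < i}"
  proof
    fix X
    assume "X \<in> {X\<in>T. g < fst X}"
    then have "isupp X \<subseteq> I" "g < fst X"
      using assms(2) by auto
    then show "isupp X \<subseteq> {i\<in>I. g < i}"
      unfolding isupp_def by fastforce
  qed
qed

text \<open>Induction on \<open>card I\<close>: either \<open>I\<close> is an interval, or it splits at a gap.\<close>

lemma ext_compatible_card_bound:
  fixes e :: "nat \<Rightarrow> 'n::finite"
  assumes "finite I" "I \<subseteq> {1..n}"
    and "T \<subseteq> intervals n" "ext_compatible orient T" "\<forall>X\<in>T. isupp X \<subseteq> I"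
  shows "card T \<le> card I \<and> (card T = card I \<longrightarrow> (\<forall>i\<in>I. axis (e i) 1 \<in> int_span (dimv e ` T)))"
  using assms
proof (induction "card I" arbitrary: I T rule: less_induct)
  case less
  show ?case
  proof (cases "I = {}")
    case True
    have "isupp X \<noteq> {}" if "X \<in> T" for X
      using that less.prems(3) by (auto simp: intervals_def isupp_def)
    then have "T = {}"
      using less.prems(5) True by blast
    then show ?thesis
      using True by simp
  next
    case False
    define u where "u = Min I"
    define m where "m = Max I"
    have uI: "u \<in> I" and mI: "m \<in> I" and um: "\<And>i. i \<in> I \<Longrightarrow> u \<le> i \<and> i \<le> m"
      unfolding u_def m_def using less.prems(1) False by auto
    show ?thesis
    proof (cases "I = {u..m}")
      case True
      have "1 \<le> u"
        using uI less.prems(2) by auto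
      then show ?thesis
        using ext_compatible_card_bound_interval[OF less.prems(3,4) _ _ conjunct1[OF um[OF mI]], of e]
          less.prems(5)
        unfolding True by blast
    next
      case False
      have "I \<subseteq> {u..m}"
        using um by auto
      then obtain g where "g \<in> {u..m}" "g \<notin> I"
        using False by blast
      then have g: "u < g" "g < m" "g \<notin> I"
        using uI mI by (auto simp: le_less)
      define IL where "IL = {i\<in>I. i < g}"
      define IR where "IR = {i\<in>I. g < i}"
      define TL where "TL = {X\<in>T. snd X < g}"
      define TR where "TR = {X\<in>T. g < fst X}"
      note split = intervals_split_at_gap[OF less.prems(3,5) g(3), folded TL_def TR_def IL_def IR_def]
      have "\<forall>i\<in>I. i < g \<or> g < i"
        using g(3) by (metis linorder_neqE_nat)
      then have I: "I = IL \<union> IR" "IL \<inter> IR = {}"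
        unfolding IL_def IR_def by auto
      have "\<not> m < g" "\<not> g < u"
        using g by simp_all
      then have "IL \<subset> I" "IR \<subset> I"
        unfolding IL_def IR_def using uI mI by blast+
      then have card_less: "card IL < card I" "card IR < card I" and fin: "finite IL" "finite IR"
        using less.prems(1) by (auto intro: psubset_card_mono finite_subset)
      have sub: "IL \<subseteq> {1..n}" "IR \<subseteq> {1..n}" "TL \<subseteq> intervals n" "TR \<subseteq> intervals n"
        using less.prems(2,3) unfolding IL_def IR_def TL_def TR_def by auto
      have compat: "ext_compatible orient TL" "ext_compatible orient TR"
        unfolding TL_def TR_def by (auto intro: ext_compatible_subset[OF less.prems(4)])
      show ?thesis
      proof (rule card_bound_Un[OF _ less.prems(1) split(1,2) I])
        show "finite T"
          using less.prems(3) intervals_finite finite_subset by blast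
        show "card TL \<le> card IL \<and> (card TL = card IL \<longrightarrow> (\<forall>i\<in>IL. axis (e i) 1 \<in> int_span (dimv e ` TL)))"
          by (rule less.hyps[OF card_less(1) fin(1) sub(1) sub(3) compat(1) split(3)])
        show "card TR \<le> card IR \<and> (card TR = card IR \<longrightarrow> (\<forall>i\<in>IR. axis (e i) 1 \<in> int_span (dimv e ` TR)))"
          by (rule less.hyps[OF card_less(2) fin(2) sub(2) sub(4) compat(2) split(4)])
      qed
    qed
  qed
qed

lemma tilting_on_axis_in_int_span:
  fixes e :: "nat \<Rightarrow> 'n::finite"
  assumes "tilting_on TYPE('k::field) orient n I T" "I \<subseteq> {1..n}" "i \<in> I"
  shows "axis (e i) 1 \<in> int_span (dimv e ` T)"
proof -
  have T: "T \<subseteq> intervals n" "\<forall>X\<in>T. isupp X \<subseteq> I" "card T = card I"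
    "\<forall>X\<in>T. \<forall>Y\<in>T. ext1_zero TYPE('k) orient n X Y"
    using assms(1) unfolding tilting_on_def by auto
  then show ?thesis
    using ext_compatible_card_bound[OF finite_subset[OF assms(2)] assms(2) T(1)
        ext_compatible_if_ext1_zero[OF T(1,4)] T(2)] assms(3) by blast
qed

section \<open>A positive combination determines the family\<close>

text \<open>\<open>\<phi>\<close> fills the capacities \<open>d\<close> greedily in the order given by \<open>key\<close>: a positive value at \<open>q'\<close>
  forces every earlier slot to be full.\<close>

lemma greedy_fill_first_difference:
  fixes \<phi> \<psi> d :: "nat \<Rightarrow> real" and key :: "nat \<Rightarrow> int"
  assumes fin: "finite S" and inj: "inj_on key S"
    and \<phi>: "\<forall>q\<in>S. 0 \<le> \<phi> q \<and> \<phi> q \<le> d q" and \<psi>: "\<forall>q\<in>S. 0 \<le> \<psi> q \<and> \<psi> q \<le> d q"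
    and greedy: "\<forall>q\<in>S. \<forall>q'\<in>S. 0 < \<phi> q' \<longrightarrow> key q < key q' \<longrightarrow> \<phi> q = d q"
    and sums: "sum \<phi> S = sum \<psi> S"
    and q0: "q0 \<in> S" "\<phi> q0 < \<psi> q0" and below: "\<forall>q\<in>S. key q < key q0 \<longrightarrow> \<phi> q = \<psi> q"
  shows False
proof -
  define L where "L = {q\<in>S. key q < key q0}"
  define R where "R = {q\<in>S. key q0 < key q}"
  have "q \<in> L \<union> ({q0} \<union> R)" if "q \<in> S" for q
  proof (cases "key q = key q0")
    case True
    then show ?thesis
      using inj q0(1) that by (simp add: inj_on_eq_iff)
  qed (use that in \<open>auto simp: L_def R_def\<close>)
  then have S: "S = L \<union> ({q0} \<union> R)"
    unfolding L_def R_def using q0(1) by auto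
  have "\<phi> q0 \<noteq> d q0"
    using q0 \<psi> by fastforce
  then have "\<forall>q\<in>R. \<phi> q = 0"
    using greedy q0(1) \<phi> unfolding R_def by (metis (no_types, lifting) less_eq_real_def mem_Collect_eq)
  then have "sum \<phi> R = 0"
    by simp
  moreover have "sum \<psi> R \<ge> 0"
    using \<psi> unfolding R_def by (intro sum_nonneg) auto
  moreover have "sum \<phi> L = sum \<psi> L"
    using below unfolding L_def by (intro sum.cong) auto
  moreover have "sum f S = sum f L + (f q0 + sum f R)" for f :: "nat \<Rightarrow> real"
    unfolding S using fin by (subst sum.union_disjoint) (auto simp: L_def R_def)
  ultimately show False
    using sums q0(2) by (smt (verit))
qed

lemma greedy_fill_unique:
  fixes \<phi> \<psi> d :: "nat \<Rightarrow> real" and key :: "nat \<Rightarrow> int"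
  assumes fin: "finite S" and inj: "inj_on key S"
    and \<phi>: "\<forall>q\<in>S. 0 \<le> \<phi> q \<and> \<phi> q \<le> d q" and \<psi>: "\<forall>q\<in>S. 0 \<le> \<psi> q \<and> \<psi> q \<le> d q"
    and greedy_\<phi>: "\<forall>q\<in>S. \<forall>q'\<in>S. 0 < \<phi> q' \<longrightarrow> key q < key q' \<longrightarrow> \<phi> q = d q"
    and greedy_\<psi>: "\<forall>q\<in>S. \<forall>q'\<in>S. 0 < \<psi> q' \<longrightarrow> key q < key q' \<longrightarrow> \<psi> q = d q"
    and sums: "sum \<phi> S = sum \<psi> S"
  shows "\<forall>q\<in>S. \<phi> q = \<psi> q"
proof (rule ccontr)
  assume "\<not> (\<forall>q\<in>S. \<phi> q = \<psi> q)"
  define D where "D = {q\<in>S. \<phi> q \<noteq> \<psi> q}"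
  have "finite (key ` D)" "key ` D \<noteq> {}"
    unfolding D_def using fin \<open>\<not> (\<forall>q\<in>S. \<phi> q = \<psi> q)\<close> by auto
  then have "Min (key ` D) \<in> key ` D"
    by (rule Min_in)
  then obtain q0 where "q0 \<in> D" "key q0 = Min (key ` D)"
    by (metis imageE)
  then have q0: "q0 \<in> S" "\<phi> q0 \<noteq> \<psi> q0"
    unfolding D_def by auto
  have first: "\<forall>q\<in>S. key q < key q0 \<longrightarrow> \<phi> q = \<psi> q"
  proof (intro ballI impI)
    fix q
    assume "q \<in> S" "key q < key q0"
    then have "q \<notin> D"
      using Min_le[OF \<open>finite (key ` D)\<close>] \<open>key q0 = Min (key ` D)\<close> by fastforce
    then show "\<phi> q = \<psi> q"
      using \<open>q \<in> S\<close> unfolding D_def by simp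
  qed
  show False
  proof (cases "\<phi> q0 < \<psi> q0")
    case True
    then show False
      using greedy_fill_first_difference[OF fin inj \<phi> \<psi> greedy_\<phi> sums q0(1)] first by blast
  next
    case False
    then have "\<psi> q0 < \<phi> q0"
      using q0(2) by simp
    then show False
      using greedy_fill_first_difference[OF fin inj \<psi> \<phi> greedy_\<psi> sums[symmetric] q0(1)] first by fastforce
  qed
qed

text \<open>For a positive combination \<open>x = (\<Sum>X\<in>F. a X *\<^sub>R dimv e X)\<close>, \<open>cover_weight F a j\<close> is the
  coordinate \<open>x\<^sub>j\<close> and \<open>weight_drop F a k = x\<^sub>k - x\<^sub>k\<^sub>+\<^sub>1\<close>.\<close>

definition cover_weight :: "interval set \<Rightarrow> (interval \<Rightarrow> real) \<Rightarrow> nat \<Rightarrow> real" where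
  "cover_weight F a j = sum a {X\<in>F. j \<in> isupp X}"

definition weight_drop :: "interval set \<Rightarrow> (interval \<Rightarrow> real) \<Rightarrow> nat \<Rightarrow> real" where
  "weight_drop F a k = sum a {X\<in>F. snd X = k} - sum a {X\<in>F. fst X = Suc k}"

lemma weight_drop_eq_diff:
  assumes "finite F" "\<forall>X\<in>F. fst X \<le> snd X"
  shows "weight_drop F a k = cover_weight F a k - cover_weight F a (Suc k)"
proof -
  have filter: "sum a {X\<in>F. P X} = (\<Sum>X\<in>F. if P X then a X else 0)" for P
    using assms(1) by (simp add: sum.inter_filter)
  have "(if k \<in> isupp X then a X else 0) - (if Suc k \<in> isupp X then a X else 0)
      = (if snd X = k then a X else 0) - (if fst X = Suc k then a X else 0)" if "X \<in> F" for X
    using assms(2) that unfolding isupp_def by auto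
  then show ?thesis
    unfolding weight_drop_def cover_weight_def filter sum_subtractf[symmetric]
    by (intro sum.cong) auto
qed

lemma ex_start_iff_weight_drop_neg:
  assumes fin: "finite F" and compat: "ext_compatible orient F" and pos: "\<forall>X\<in>F. 0 < a X"
  shows "(\<exists>X\<in>F. fst X = Suc k) \<longleftrightarrow> weight_drop F a k < 0"
proof
  assume "\<exists>X\<in>F. fst X = Suc k"
  then obtain X where X: "X \<in> F" "fst X = Suc k"
    by blast
  then have none: "{Y\<in>F. snd Y = k} = {}"
    using ext_compatibleD(1)[OF compat _ X(1)] by auto
  have "sum a {Y\<in>F. fst Y = Suc k} > 0"
    using X fin pos by (intro sum_pos2[of _ X]) auto
  then show "weight_drop F a k < 0"
    unfolding weight_drop_def none by simp
next
  assume "weight_drop F a k < 0"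
  moreover have "sum a {Y\<in>F. snd Y = k} \<ge> 0"
    using pos by (intro sum_nonneg) auto
  ultimately have "sum a {Y\<in>F. fst Y = Suc k} \<noteq> 0"
    unfolding weight_drop_def by linarith
  then have "{Y\<in>F. fst Y = Suc k} \<noteq> {}"
    by (rule contrapos_nn) (simp only: sum.empty)
  then show "\<exists>X\<in>F. fst X = Suc k"
    by blast
qed

lemma fst_image_eq_weight_drop_neg:
  assumes fin: "finite F" and compat: "ext_compatible orient F" and pos: "\<forall>X\<in>F. 0 < a X"
    and start: "\<forall>X\<in>F. 1 \<le> fst X"
  shows "fst ` F = Suc ` {k. weight_drop F a k < 0}"
proof
  show "fst ` F \<subseteq> Suc ` {k. weight_drop F a k < 0}"
  proof
    fix j
    assume "j \<in> fst ` F"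
    then obtain X where X: "X \<in> F" "j = fst X"
      by blast
    then have "j = Suc (fst X - 1)"
      using start by auto
    moreover have "weight_drop F a (fst X - 1) < 0"
      using ex_start_iff_weight_drop_neg[OF fin compat pos] X \<open>j = Suc (fst X - 1)\<close> by blast
    ultimately show "j \<in> Suc ` {k. weight_drop F a k < 0}"
      by blast
  qed
  show "Suc ` {k. weight_drop F a k < 0} \<subseteq> fst ` F"
  proof
    fix j
    assume "j \<in> Suc ` {k. weight_drop F a k < 0}"
    then obtain k where "j = Suc k" "weight_drop F a k < 0"
      by blast
    then obtain X where "X \<in> F" "fst X = j"
      using ex_start_iff_weight_drop_neg[OF fin compat pos] by blast
    then show "j \<in> fst ` F"
      by blast
  qed
qed

definition top_weight :: "interval set \<Rightarrow> (interval \<Rightarrow> real) \<Rightarrow> nat \<Rightarrow> nat \<Rightarrow> real" where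
  "top_weight F a A q = (if (A, q) \<in> F then a (A, q) else 0)"

text \<open>The order in which the intervals \<open>[A, q]\<close> starting at the largest left end \<open>A\<close> are filled:
  first the ends \<open>q < n\<close> whose arrow \<open>q\<close> is oriented like the arrow \<open>A - 1\<close>, increasingly, then \<open>n\<close>,
  then the remaining ends, decreasingly.  Compatibility forces this order (\<open>top_weight_greedy\<close>).\<close>

definition greedy_key :: "(nat \<Rightarrow> bool) \<Rightarrow> nat \<Rightarrow> nat \<Rightarrow> nat \<Rightarrow> int" where
  "greedy_key orient n A q = (if orient q = orient (A - 1) \<and> q < n then int q else 2 * int n - int q)"

lemma inj_on_greedy_key: "inj_on (greedy_key orient n A) {A..n}"
  by (rule inj_onI) (auto simp: greedy_key_def split: if_splits)

context
  fixes F :: "interval set" and a :: "interval \<Rightarrow> real" and A n :: nat and orient :: "nat \<Rightarrow> bool"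
  assumes fin: "finite F" and sub: "F \<subseteq> intervals n" and compat: "ext_compatible orient F"
    and pos: "\<forall>X\<in>F. 0 < a X" and top: "\<forall>X\<in>F. fst X \<le> A" and start: "\<exists>X\<in>F. fst X = A"
begin

lemma weight_drop_above_top:
  assumes "A \<le> q"
  shows "weight_drop F a q = sum a {X\<in>F. snd X = q}"
proof -
  have none: "{X\<in>F. fst X = Suc q} = {}"
    using top assms by fastforce
  show ?thesis
    unfolding weight_drop_def none by simp
qed

lemma top_weight_bounds:
  assumes "A \<le> q"
  shows "0 \<le> top_weight F a A q \<and> top_weight F a A q \<le> weight_drop F a q"
proof -
  have "0 \<le> sum a {X\<in>F. snd X = q}"
    using pos by (intro sum_nonneg) auto
  moreover have "a (A, q) \<le> sum a {X\<in>F. snd X = q}" if "(A, q) \<in> F"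
    using that fin pos by (intro member_le_sum) auto
  ultimately show ?thesis
    using pos weight_drop_above_top[OF assms] by (auto simp: top_weight_def)
qed

lemma top_weight_outside: "q \<notin> {A..n} \<Longrightarrow> top_weight F a A q = 0"
  using sub unfolding top_weight_def intervals_def by auto

lemma top_weight_sum:
  "sum (top_weight F a A) {A..n} = - weight_drop F a (A - 1)"
  "sum a {X\<in>F. fst X = A} = - weight_drop F a (A - 1)"
proof -
  obtain X0 where X0: "X0 \<in> F" "fst X0 = A"
    using start by blast
  then have A1: "1 \<le> A"
    using sub unfolding intervals_def by auto
  have "Suc (snd X) \<noteq> A" if "X \<in> F" for X
    using ext_compatibleD(1)[OF compat that X0(1)] X0(2) by simp
  then have none: "{X\<in>F. snd X = A - 1} = {}"
    using A1 by fastforce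
  have drop: "weight_drop F a (A - 1) = - sum a {X\<in>F. fst X = A}"
    unfolding weight_drop_def none using A1 by simp
  then show "sum a {X\<in>F. fst X = A} = - weight_drop F a (A - 1)"
    by simp
  have "{X\<in>F. fst X = A} = (\<lambda>q. (A, q)) ` {q\<in>{A..n}. (A, q) \<in> F}"
    using sub by (force simp: intervals_def image_iff)
  then have "sum a {X\<in>F. fst X = A} = sum (\<lambda>q. a (A, q)) {q\<in>{A..n}. (A, q) \<in> F}"
    by (simp add: sum.reindex inj_on_def)
  also have "\<dots> = sum (top_weight F a A) {A..n}"
    unfolding top_weight_def by (rule sum.inter_filter) simp
  finally show "sum (top_weight F a A) {A..n} = - weight_drop F a (A - 1)"
    using drop by simp
qed

text \<open>If \<open>[A, q']\<close> carries weight and \<open>q\<close> comes earlier, every other interval ending at \<open>q\<close> would be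
  nested in or overlap \<open>[A, q']\<close> in a way that compatibility forbids; so all weight ending
  at \<open>q\<close> is carried by \<open>[A, q]\<close>.\<close>

lemma top_weight_greedy:
  assumes q: "q \<in> {A..n}" "q' \<in> {A..n}" and "0 < top_weight F a A q'"
    and key: "greedy_key orient n A q < greedy_key orient n A q'"
  shows "top_weight F a A q = weight_drop F a q"
proof -
  have F2: "(A, q') \<in> F"
    using assms(3) by (auto simp: top_weight_def split: if_splits)
  have only: "{X\<in>F. snd X = q} \<subseteq> {(A, q)}"
  proof
    fix X
    assume "X \<in> {X\<in>F. snd X = q}"
    then have X: "X \<in> F" "snd X = q"
      by auto
    show "X \<in> {(A, q)}"
    proof (rule ccontr)
      assume "X \<notin> {(A, q)}"
      then have "fst X < A"
        using X top by (metis le_neq_implies_less prod.collapse singletonI)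
      have "q \<noteq> q'"
        using key by auto
      then consider "q < q'" | "q' < q"
        by linarith
      then show False
      proof cases
        case 1
        have "orient (A - 1) \<noteq> orient q"
          using ext_compatibleD(3)[OF compat X(1) F2] X(2) \<open>fst X < A\<close> q(1) 1 by simp
        then have "greedy_key orient n A q = 2 * int n - int q"
          by (simp add: greedy_key_def)
        moreover have "greedy_key orient n A q' \<le> 2 * int n - int q'"
          using q(2) by (simp add: greedy_key_def)
        ultimately show False
          using key 1 by simp
      next
        case 2
        have "orient (A - 1) = orient q'"
          using ext_compatibleD(2)[OF compat X(1) F2] X(2) \<open>fst X < A\<close> 2 by simp
        then have "greedy_key orient n A q' = int q'"
          using 2 q(1) by (simp add: greedy_key_def)
        moreover have "greedy_key orient n A q \<ge> int q' + 1"
          using 2 q(1) by (auto simp: greedy_key_def)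
        ultimately show False
          using key by simp
      qed
    qed
  qed
  show ?thesis
  proof (cases "(A, q) \<in> F")
    case True
    then have ends: "{X\<in>F. snd X = q} = {(A, q)}"
      using only by auto
    have "weight_drop F a q = sum a {X\<in>F. snd X = q}"
      using weight_drop_above_top q(1) by simp
    then show ?thesis
      using True unfolding ends top_weight_def by simp
  next
    case False
    then have ends: "{X\<in>F. snd X = q} = {}"
      using only by auto
    have "weight_drop F a q = sum a {X\<in>F. snd X = q}"
      using weight_drop_above_top q(1) by simp
    then show ?thesis
      using False unfolding ends top_weight_def by simp
  qed
qed

end

lemma top_weight_unique:
  assumes F: "finite F" "F \<subseteq> intervals n" "ext_compatible orient F" "\<forall>X\<in>F. 0 < a X"
      "\<forall>X\<in>F. fst X \<le> A" "\<exists>X\<in>F. fst X = A"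
    and F': "finite F'" "F' \<subseteq> intervals n" "ext_compatible orient F'" "\<forall>X\<in>F'. 0 < a' X"
      "\<forall>X\<in>F'. fst X \<le> A" "\<exists>X\<in>F'. fst X = A"
    and drop: "\<And>k. weight_drop F a k = weight_drop F' a' k"
  shows "top_weight F a A q = top_weight F' a' A q"
proof (cases "q \<in> {A..n}")
  case True
  have "\<forall>q\<in>{A..n}. top_weight F a A q = top_weight F' a' A q"
  proof (rule greedy_fill_unique[OF finite_atLeastAtMost inj_on_greedy_key])
    show "\<forall>q\<in>{A..n}. 0 \<le> top_weight F a A q \<and> top_weight F a A q \<le> weight_drop F a q"
      using top_weight_bounds[OF F] by simp
    show "\<forall>q\<in>{A..n}. 0 \<le> top_weight F' a' A q \<and> top_weight F' a' A q \<le> weight_drop F a q"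
      using top_weight_bounds[OF F'] drop by simp
    show "\<forall>q\<in>{A..n}. \<forall>q'\<in>{A..n}. 0 < top_weight F a A q' \<longrightarrow>
        greedy_key orient n A q < greedy_key orient n A q' \<longrightarrow> top_weight F a A q = weight_drop F a q"
      using top_weight_greedy[OF F] by blast
    show "\<forall>q\<in>{A..n}. \<forall>q'\<in>{A..n}. 0 < top_weight F' a' A q' \<longrightarrow>
        greedy_key orient n A q < greedy_key orient n A q' \<longrightarrow> top_weight F' a' A q = weight_drop F a q"
      using top_weight_greedy[OF F'] drop by metis
    show "sum (top_weight F a A) {A..n} = sum (top_weight F' a' A) {A..n}"
      using top_weight_sum(1)[OF F] top_weight_sum(1)[OF F'] drop by simp
  qed
  then show ?thesis
    using True by blast
next
  case False
  then show ?thesis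
    using top_weight_outside[OF F] top_weight_outside[OF F'] by simp
qed

lemma weight_drop_remove_top:
  assumes "finite F"
  shows "weight_drop {X\<in>F. fst X \<noteq> A} a k = weight_drop F a k - top_weight F a A k
           + (if Suc k = A then sum a {X\<in>F. fst X = A} else 0)"
proof -
  have ends: "{X\<in>F. snd X = k} = {X\<in>{X\<in>F. fst X \<noteq> A}. snd X = k} \<union> {X\<in>F. snd X = k \<and> fst X = A}"
    by auto
  have top: "{X\<in>F. snd X = k \<and> fst X = A} = (if (A, k) \<in> F then {(A, k)} else {})"
    by (auto simp: prod_eq_iff)
  have "sum a {X\<in>F. snd X = k} = sum a {X\<in>{X\<in>F. fst X \<noteq> A}. snd X = k} + top_weight F a A k"
    unfolding ends using assms by (subst sum.union_disjoint) (auto simp: top top_weight_def)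
  moreover have "sum a {X\<in>{X\<in>F. fst X \<noteq> A}. fst X = Suc k}
      = (if Suc k = A then 0 else sum a {X\<in>F. fst X = Suc k})"
    by (auto intro: sum.cong)
  ultimately show ?thesis
    unfolding weight_drop_def by auto
qed

text \<open>Peel off the intervals with the largest left end, whose weights are forced by the greedy order.\<close>

lemma weight_drop_determines:
  assumes "finite F" "F \<subseteq> intervals n" "ext_compatible orient F" "\<forall>X\<in>F. 0 < a X"
    "finite F'" "F' \<subseteq> intervals n" "ext_compatible orient F'" "\<forall>X\<in>F'. 0 < a' X"
    "\<forall>k. weight_drop F a k = weight_drop F' a' k"
  shows "F = F' \<and> (\<forall>X\<in>F. a X = a' X)"
  using assms
proof (induction "card F" arbitrary: F F' a a' rule: less_induct)
  case less
  note F = less.prems(1-4) and F' = less.prems(5-8)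
  have drop: "\<And>k. weight_drop F a k = weight_drop F' a' k"
    using less.prems(9) by blast
  have "\<forall>X\<in>F. 1 \<le> fst X" "\<forall>X\<in>F'. 1 \<le> fst X"
    using F(2) F'(2) unfolding intervals_def by auto
  then have fst_eq: "fst ` F = fst ` F'"
    using fst_image_eq_weight_drop_neg[OF F(1,3,4)] fst_image_eq_weight_drop_neg[OF F'(1,3,4)] drop
    by simp
  show ?case
  proof (cases "F = {}")
    case True
    then show ?thesis
      using fst_eq by simp
  next
    case False
    define A where "A = Max (fst ` F)"
    have top: "\<forall>X\<in>F. fst X \<le> A" "\<forall>X\<in>F'. fst X \<le> A"
      unfolding A_def using F(1) F'(1) by (simp, simp add: fst_eq)
    have "A \<in> fst ` F"
      unfolding A_def using F(1) False by simp
    then have start: "\<exists>X\<in>F. fst X = A" "\<exists>X\<in>F'. fst X = A"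
      using fst_eq by (metis imageE)+
    have top_eq: "top_weight F a A q = top_weight F' a' A q" for q
      using top_weight_unique[OF F top(1) start(1) F' top(2) start(2) drop] .
    define F1 where "F1 = {X\<in>F. fst X \<noteq> A}"
    define F1' where "F1' = {X\<in>F'. fst X \<noteq> A}"
    have "sum a {X\<in>F. fst X = A} = sum a' {X\<in>F'. fst X = A}"
      using top_weight_sum(2)[OF F top(1) start(1)] top_weight_sum(2)[OF F' top(2) start(2)] drop by simp
    then have drop1: "\<forall>k. weight_drop F1 a k = weight_drop F1' a' k"
      unfolding F1_def F1'_def weight_drop_remove_top[OF F(1)] weight_drop_remove_top[OF F'(1)]
      using drop top_eq by simp
    have "card F1 < card F"
      unfolding F1_def using F(1) start(1) by (intro psubset_card_mono) auto
    moreover have sub: "F1 \<subseteq> F" "F1' \<subseteq> F'"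
      unfolding F1_def F1'_def by auto
    ultimately have IH: "F1 = F1' \<and> (\<forall>X\<in>F1. a X = a' X)"
      using F(4) F'(4) drop1
      by (intro less.hyps[OF _ finite_subset[OF sub(1) F(1)] subset_trans[OF sub(1) F(2)]
          ext_compatible_subset[OF F(3) sub(1)] _ finite_subset[OF sub(2) F'(1)]
          subset_trans[OF sub(2) F'(2)] ext_compatible_subset[OF F'(3) sub(2)]]) auto
    have top_layer: "X \<in> F \<longleftrightarrow> X \<in> F'" "X \<in> F \<Longrightarrow> a X = a' X" if "fst X = A" for X
    proof -
      have X: "X = (A, snd X)"
        using that by (simp add: prod_eq_iff)
      show "X \<in> F \<longleftrightarrow> X \<in> F'"
        using top_eq[of "snd X"] F(4) F'(4) X unfolding top_weight_def by (metis less_irrefl)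
      show "a X = a' X" if "X \<in> F"
        using top_eq[of "snd X"] that \<open>X \<in> F \<longleftrightarrow> X \<in> F'\<close> X unfolding top_weight_def by (metis)
    qed
    have "F = F'"
      using IH top_layer(1) unfolding F1_def F1'_def by blast
    moreover have "\<forall>X\<in>F. a X = a' X"
      using IH top_layer(2) unfolding F1_def by blast
    ultimately show ?thesis
      by blast
  qed
qed

lemma cover_weight_determines:
  assumes "finite T" "T \<subseteq> intervals n" "ext_compatible orient T" "\<forall>X\<in>T. 0 < a X"
    "finite T'" "T' \<subseteq> intervals n" "ext_compatible orient T'" "\<forall>X\<in>T'. 0 < a' X"
    "\<forall>j\<in>{1..n}. cover_weight T a j = cover_weight T' a' j"
  shows "T = T'"
proof -
  have "cover_weight T a j = 0" "cover_weight T' a' j = 0" if "j \<notin> {1..n}" for j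
    using that assms(2,6) unfolding cover_weight_def intervals_def isupp_def by (force intro: sum.neutral)+
  then have "cover_weight T a j = cover_weight T' a' j" for j
    using assms(9) by (cases "j \<in> {1..n}") auto
  moreover have "\<forall>X\<in>T. fst X \<le> snd X" "\<forall>X\<in>T'. fst X \<le> snd X"
    using assms(2,6) unfolding intervals_def by auto
  ultimately have "\<forall>k. weight_drop T a k = weight_drop T' a' k"
    using weight_drop_eq_diff assms(1,5) by simp
  then show ?thesis
    using weight_drop_determines[OF assms(1-8)] by blast
qed

section \<open>The three polytopes\<close>

lemma isupp_subset: "X \<in> intervals n \<Longrightarrow> isupp X \<subseteq> {1..n}"
  unfolding intervals_def isupp_def by auto

lemma msupp_subset: "T \<subseteq> intervals n \<Longrightarrow> msupp T \<subseteq> {1..n}"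
  unfolding msupp_def using isupp_subset by blast

lemma dimv_component:
  assumes inj: "inj_on e {1..n}" and X: "X \<in> intervals n" and j: "j \<in> {1..n}"
  shows "dimv e X $ e j = (if j \<in> isupp X then 1 else 0)"
proof -
  have "dimv e X $ e j = (\<Sum>i\<in>isupp X. if i = j then 1 else 0)"
    unfolding dimv_def sum_component
  proof (rule sum.cong)
    fix i
    assume "i \<in> isupp X"
    then have "e j = e i \<longleftrightarrow> i = j"
      using isupp_subset[OF X] inj j by (auto dest: inj_onD)
    then show "axis (e i) 1 $ e j = (if i = j then 1 else 0)"
      by (simp add: axis_def)
  qed simp
  then show ?thesis
    by (simp add: isupp_def)
qed

lemma dimv_Ints: "dimv e X $ k \<in> \<int>"
  unfolding dimv_def sum_component by (intro Ints_sum) (auto simp: axis_def)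

lemma dimv_nonneg: "dimv e X $ k \<ge> 0"
  unfolding dimv_def sum_component by (intro sum_nonneg) (auto simp: axis_def)

lemma inj_on_dimv:
  assumes "inj_on e {1..n}"
  shows "inj_on (dimv e) (intervals n)"
proof (rule inj_onI)
  fix X Y
  assume X: "X \<in> intervals n" and Y: "Y \<in> intervals n" and eq: "dimv e X = dimv e Y"
  have "j \<in> isupp X \<longleftrightarrow> j \<in> isupp Y" if "j \<in> {1..n}" for j
    using dimv_component[OF assms X that] dimv_component[OF assms Y that] eq by (auto split: if_splits)
  then have "isupp X = isupp Y"
    using isupp_subset[OF X] isupp_subset[OF Y] by blast
  moreover have "fst X \<le> snd X" "fst Y \<le> snd Y"
    using X Y unfolding intervals_def by auto
  ultimately show "X = Y"
    unfolding isupp_def by (simp add: prod_eq_iff)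
qed

lemma dimv_ne_uminus_dimv:
  assumes "inj_on e {1..n}" "X \<in> intervals n"
  shows "dimv e X \<noteq> - dimv e Y"
proof -
  have "fst X \<in> {1..n}" "fst X \<in> isupp X"
    using assms(2) unfolding intervals_def isupp_def by auto
  then have "dimv e X $ e (fst X) = 1"
    using dimv_component[OF assms] by simp
  then show ?thesis
    using dimv_nonneg[of e Y "e (fst X)"] by auto
qed

lemma sum_dimv_component:
  assumes "inj_on e {1..n}" "finite T" "T \<subseteq> intervals n" "j \<in> {1..n}"
  shows "(\<Sum>X\<in>T. a X *\<^sub>R dimv e X) $ e j = cover_weight T a j"
proof -
  have "(\<Sum>X\<in>T. a X *\<^sub>R dimv e X) $ e j = (\<Sum>X\<in>T. if j \<in> isupp X then a X else 0)"
    unfolding sum_component using dimv_component[OF assms(1) _ assms(4)] assms(3)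
    by (intro sum.cong) auto
  also have "\<dots> = cover_weight T a j"
    unfolding cover_weight_def using assms(2) by (simp add: sum.inter_filter)
  finally show ?thesis .
qed

lemma cover_weight_nonneg: "\<forall>X\<in>T. 0 < a X \<Longrightarrow> cover_weight T a j \<ge> 0"
  unfolding cover_weight_def by (intro sum_nonneg) auto

lemma cover_weight_outside_msupp: "j \<notin> msupp T \<Longrightarrow> cover_weight T a j = 0"
  unfolding cover_weight_def msupp_def by (auto intro: sum.neutral)

lemma open_cone_image:
  assumes "inj_on f A" "x \<in> open_cone (f ` A)"
  obtains a where "\<forall>X\<in>A. 0 < a X" "x = (\<Sum>X\<in>A. a X *\<^sub>R f X)"
proof -
  obtain c where c: "\<forall>w\<in>f ` A. 0 < c w" "x = (\<Sum>w\<in>f ` A. c w *\<^sub>R w)"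
    using assms(2) unfolding open_cone_def by blast
  have "x = (\<Sum>X\<in>A. c (f X) *\<^sub>R f X)"
    using c(2) sum.reindex[OF assms(1)] by (simp add: o_def)
  then show ?thesis
    using c(1) that[of "c \<circ> f"] by simp
qed

lemma open_cone_Un:
  assumes "finite A" "finite B" "A \<inter> B = {}" "x \<in> open_cone (A \<union> B)"
  obtains y z where "y \<in> open_cone A" "z \<in> open_cone B" "x = y + z"
proof -
  obtain c where c: "\<forall>w\<in>A \<union> B. 0 < c w" "x = (\<Sum>w\<in>A \<union> B. c w *\<^sub>R w)"
    using assms(4) unfolding open_cone_def by blast
  then have "x = (\<Sum>w\<in>A. c w *\<^sub>R w) + (\<Sum>w\<in>B. c w *\<^sub>R w)"
    using assms(1-3) by (simp add: sum.union_disjoint)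
  moreover have "(\<Sum>w\<in>A. c w *\<^sub>R w) \<in> open_cone A" "(\<Sum>w\<in>B. c w *\<^sub>R w) \<in> open_cone B"
    unfolding open_cone_def using c(1) by blast+
  ultimately show ?thesis
    using that by blast
qed

definition spanning_on :: "(nat \<Rightarrow> 'n::finite) \<Rightarrow> nat set \<Rightarrow> interval set \<Rightarrow> bool" where
  "spanning_on e I T \<longleftrightarrow> msupp T \<subseteq> I \<and> card T = card I \<and> (\<forall>i\<in>I. axis (e i) 1 \<in> int_span (dimv e ` T))"

lemma tilting_on_spanning_on:
  assumes "tilting_on TYPE('k::field) orient n I T" "I \<subseteq> {1..n}"
  shows "spanning_on e I T"
  using assms tilting_on_axis_in_int_span[OF assms]
  unfolding spanning_on_def tilting_on_def msupp_def by blast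

lemma msupp_simples: "msupp ((\<lambda>j. (j, j)) ` J) = J"
  unfolding msupp_def isupp_def by auto

lemma spanning_on_simples:
  assumes "finite J"
  shows "spanning_on e J ((\<lambda>j. (j, j)) ` J)"
proof -
  have "msupp ((\<lambda>j. (j, j)) ` J) = J"
    by (rule msupp_simples)
  moreover have "card ((\<lambda>j. (j, j)) ` J) = card J"
    by (simp add: card_image inj_on_def)
  moreover have "axis (e j) 1 \<in> int_span (dimv e ` (\<lambda>j. (j, j)) ` J)" if "j \<in> J" for j
  proof -
    have "axis (e j) 1 \<in> dimv e ` (\<lambda>j. (j, j)) ` J"
      using that dimv_singleton[of e j, symmetric] by blast
    then show ?thesis
      using assms by (intro int_span_superset) auto
  qed
  ultimately show ?thesis
    unfolding spanning_on_def by blast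
qed

definition signed_dimvs :: "(nat \<Rightarrow> 'n::finite) \<Rightarrow> interval set \<times> interval set \<Rightarrow> (real^'n) set" where
  "signed_dimvs e TT = dimv e ` fst TT \<union> (\<lambda>Y. - dimv e Y) ` snd TT"

lemma sigma_two_eq: "sigma_two e TT = convex hull (insert 0 (signed_dimvs e TT))"
  unfolding sigma_two_def signed_dimvs_def ..

lemma sigma_plus_eq: "sigma_plus e T = sigma_two e (T, {})"
  unfolding sigma_plus_def sigma_two_def by simp

lemma sigma_clus_eq: "sigma_clus n e T = sigma_two e (T, (\<lambda>j. (j, j)) ` ({1..n} - msupp T))"
  unfolding sigma_clus_def sigma_two_def by (simp add: image_image dimv_singleton)

lemma signed_dimvs_int_basis:
  fixes e :: "nat \<Rightarrow> 'n::finite"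
  assumes bij: "bij_betw e {1..n} (UNIV :: 'n set)"
    and T: "Tp \<subseteq> intervals n" "Tm \<subseteq> intervals n"
    and I: "I \<subseteq> {1..n}" "spanning_on e I Tp" "spanning_on e ({1..n} - I) Tm"
  defines "W \<equiv> signed_dimvs e (Tp, Tm)"
  shows "int_basis W"
proof -
  have inj: "inj_on e {1..n}" and CARD: "CARD('n) = n"
    using bij bij_betw_same_card[OF bij] by (auto simp: bij_betw_def)
  have fin: "finite Tp" "finite Tm"
    using T intervals_finite finite_subset by blast+
  then have finW: "finite W"
    unfolding W_def signed_dimvs_def by simp
  have "inj_on (dimv e) Tp" "inj_on (\<lambda>Y. - dimv e Y) Tm"
    using inj_on_subset[OF inj_on_dimv[OF inj]] T by (auto simp: inj_on_def)
  moreover have "dimv e ` Tp \<inter> (\<lambda>Y. - dimv e Y) ` Tm = {}"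
    using dimv_ne_uminus_dimv[OF inj] T by blast
  ultimately have "card W = card Tp + card Tm"
    unfolding W_def signed_dimvs_def using fin by (simp add: card_Un_disjoint card_image)
  also have "\<dots> = card I + card ({1..n} - I)"
    using I unfolding spanning_on_def by simp
  also have "\<dots> = CARD('n)"
    using I(1) CARD card_mono[OF finite_atLeastAtMost I(1)]
    by (simp add: card_Diff_subset finite_subset)
  finally have cardW: "card W = CARD('n)" .
  have "axis (e i) 1 \<in> int_span W" if "i \<in> {1..n}" for i
  proof (cases "i \<in> I")
    case True
    then have "axis (e i) 1 \<in> int_span (dimv e ` Tp)"
      using I(2) unfolding spanning_on_def by blast
    moreover have "int_span (dimv e ` Tp) \<subseteq> int_span W"
      using finW unfolding W_def signed_dimvs_def by (intro int_span_mono) auto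
    ultimately show ?thesis
      by blast
  next
    case False
    then have "axis (e i) 1 \<in> int_span (dimv e ` Tm)"
      using I(3) that unfolding spanning_on_def by blast
    moreover have "int_span (dimv e ` Tm) \<subseteq> int_span (uminus ` dimv e ` Tm)"
      by (rule int_span_image_uminus)
    moreover have "int_span (uminus ` dimv e ` Tm) \<subseteq> int_span W"
      using finW unfolding W_def signed_dimvs_def by (intro int_span_mono) auto
    ultimately show ?thesis
      by blast
  qed
  moreover have "\<forall>k. \<exists>i\<in>{1..n}. k = e i"
    using bij unfolding bij_betw_def by auto
  moreover have "\<forall>w\<in>W. \<forall>i. w $ i \<in> \<int>"
    unfolding W_def signed_dimvs_def using dimv_Ints by auto
  ultimately show ?thesis
    unfolding int_basis_def using finW cardW by metis
qed

lemma open_cone_signed_dimvs: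
  assumes inj: "inj_on e {1..n}" and T: "Tp \<subseteq> intervals n" "Tm \<subseteq> intervals n"
    and disj: "msupp Tp \<inter> msupp Tm = {}"
    and x: "x \<in> open_cone (signed_dimvs e (Tp, Tm))"
  obtains a b where "\<forall>X\<in>Tp. 0 < a X" "\<forall>Y\<in>Tm. 0 < b Y"
    "\<forall>j\<in>{1..n}. cover_weight Tp a j = max 0 (x $ e j) \<and> cover_weight Tm b j = max 0 (- x $ e j)"
proof -
  have fin: "finite Tp" "finite Tm"
    using T intervals_finite finite_subset by blast+
  have inj_p: "inj_on (dimv e) Tp" and inj_m: "inj_on (\<lambda>Y. - dimv e Y) Tm"
    using inj_on_subset[OF inj_on_dimv[OF inj]] T by (auto simp: inj_on_def)
  have "dimv e ` Tp \<inter> (\<lambda>Y. - dimv e Y) ` Tm = {}"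
    using dimv_ne_uminus_dimv[OF inj] T by blast
  moreover have "x \<in> open_cone (dimv e ` Tp \<union> (\<lambda>Y. - dimv e Y) ` Tm)"
    using x unfolding signed_dimvs_def by simp
  ultimately obtain y z where yz: "y \<in> open_cone (dimv e ` Tp)"
    "z \<in> open_cone ((\<lambda>Y. - dimv e Y) ` Tm)" "x = y + z"
    using open_cone_Un[OF finite_imageI[OF fin(1)] finite_imageI[OF fin(2)]] by metis
  obtain a where a: "\<forall>X\<in>Tp. 0 < a X" "y = (\<Sum>X\<in>Tp. a X *\<^sub>R dimv e X)"
    using open_cone_image[OF inj_p yz(1)] by blast
  obtain b where b: "\<forall>Y\<in>Tm. 0 < b Y" "z = - (\<Sum>Y\<in>Tm. b Y *\<^sub>R dimv e Y)"
    using open_cone_image[OF inj_m yz(2)] by (auto simp: sum_negf)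
  have "cover_weight Tp a j = max 0 (x $ e j) \<and> cover_weight Tm b j = max 0 (- x $ e j)"
    if j: "j \<in> {1..n}" for j
  proof -
    have xj: "x $ e j = cover_weight Tp a j - cover_weight Tm b j"
      using yz(3) a(2) b(2) sum_dimv_component[OF inj fin(1) T(1) j] sum_dimv_component[OF inj fin(2) T(2) j]
      by simp
    have "cover_weight Tp a j = 0 \<or> cover_weight Tm b j = 0"
      using disj cover_weight_outside_msupp by blast
    then show ?thesis
      using xj cover_weight_nonneg[OF a(1), of j] cover_weight_nonneg[OF b(1), of j] by auto
  qed
  then show ?thesis
    using that a(1) b(1) by blast
qed

lemma measure_UN_sigma_two:
  fixes e :: "nat \<Rightarrow> 'n::finite"
  assumes bij: "bij_betw e {1..n} (UNIV :: 'n set)" and fin: "finite \<T>"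
    and pairs: "\<And>Tp Tm. (Tp, Tm) \<in> \<T> \<Longrightarrow> Tp \<subseteq> intervals n \<and> Tm \<subseteq> intervals n \<and>
      (\<exists>I\<subseteq>{1..n}. spanning_on e I Tp \<and> spanning_on e ({1..n} - I) Tm)"
    and disjoint: "\<And>TT TT'. TT \<in> \<T> \<Longrightarrow> TT' \<in> \<T> \<Longrightarrow>
      open_cone (signed_dimvs e TT) \<inter> open_cone (signed_dimvs e TT') \<noteq> {} \<Longrightarrow> TT = TT'"
  shows "measure lborel (\<Union>TT\<in>\<T>. sigma_two e TT) = card \<T> / fact n"
proof -
  have "measure lborel (\<Union>TT\<in>\<T>. convex hull (insert 0 (signed_dimvs e TT))) = card \<T> / fact CARD('n)"
  proof (rule measure_UN_simplices_int_basis[OF fin _ disjoint])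
    fix TT
    assume "TT \<in> \<T>"
    then obtain Tp Tm I where "TT = (Tp, Tm)" "Tp \<subseteq> intervals n" "Tm \<subseteq> intervals n" "I \<subseteq> {1..n}"
      "spanning_on e I Tp" "spanning_on e ({1..n} - I) Tm"
      using pairs by (metis prod.collapse)
    then show "int_basis (signed_dimvs e TT)"
      using signed_dimvs_int_basis[OF bij] by blast
  qed
  then show ?thesis
    using bij_betw_same_card[OF bij] by (simp add: sigma_two_eq)
qed

lemma tilting_onD:
  assumes "tilting_on TYPE('k::field) orient n I T"
  shows "T \<subseteq> intervals n" "finite T" "ext_compatible orient T"
  using assms ext_compatible_if_ext1_zero intervals_finite finite_subset
  unfolding tilting_on_def by blast+

lemma finite_tilting_modules:
  "finite (tilt_plus TYPE('k::field) orient n)" "finite (tilt_clus TYPE('k) orient n)"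
  "finite (tilt_two TYPE('k) orient n)"
proof -
  have "tilt_plus TYPE('k) orient n \<subseteq> Pow (intervals n)" "tilt_clus TYPE('k) orient n \<subseteq> Pow (intervals n)"
    "tilt_two TYPE('k) orient n \<subseteq> Pow (intervals n) \<times> Pow (intervals n)"
    unfolding tilt_plus_def tilt_clus_def tilt_two_def tilting_on_def by auto
  then show "finite (tilt_plus TYPE('k::field) orient n)" "finite (tilt_clus TYPE('k) orient n)"
    "finite (tilt_two TYPE('k) orient n)"
    using intervals_finite by (meson finite_Pow_iff finite_SigmaI finite_subset)+
qed

lemma measure_P_plus:
  assumes bij: "bij_betw e {1..n} (UNIV :: 'n::finite set)"
  shows "measure lborel (P_plus TYPE('k::field) orient n e) = card (tilt_plus TYPE('k) orient n) / fact n"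
proof -
  let ?\<T> = "(\<lambda>T. (T, {} :: interval set)) ` tilt_plus TYPE('k) orient n"
  have inj: "inj_on e {1..n}"
    using bij by (simp add: bij_betw_def)
  have "measure lborel (\<Union>TT\<in>?\<T>. sigma_two e TT) = card ?\<T> / fact n"
  proof (rule measure_UN_sigma_two[OF bij])
    show "finite ?\<T>"
      using finite_tilting_modules(1) by blast
  next
    fix Tp Tm
    assume "(Tp, Tm) \<in> ?\<T>"
    then have T: "tilting_on TYPE('k) orient n {1..n} Tp" and "Tm = {}"
      unfolding tilt_plus_def by auto
    moreover have "spanning_on e {} {}"
      by (simp add: spanning_on_def msupp_def)
    ultimately show "Tp \<subseteq> intervals n \<and> Tm \<subseteq> intervals n \<and>
        (\<exists>I\<subseteq>{1..n}. spanning_on e I Tp \<and> spanning_on e ({1..n} - I) Tm)"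
      using tilting_onD(1)[OF T] tilting_on_spanning_on[OF T order_refl]
      by (intro conjI exI[of _ "{1..n}"]) auto
  next
    fix TT TT'
    assume "TT \<in> ?\<T>" "TT' \<in> ?\<T>"
      and "open_cone (signed_dimvs e TT) \<inter> open_cone (signed_dimvs e TT') \<noteq> {}"
    then obtain T T' x where T: "tilting_on TYPE('k) orient n {1..n} T" "TT = (T, {})"
      and T': "tilting_on TYPE('k) orient n {1..n} T'" "TT' = (T', {})"
      and x: "x \<in> open_cone (signed_dimvs e TT)" "x \<in> open_cone (signed_dimvs e TT')"
      unfolding tilt_plus_def by auto
    obtain a where a: "\<forall>X\<in>T. 0 < a X" "\<forall>j\<in>{1..n}. cover_weight T a j = max 0 (x $ e j)"
      by (rule open_cone_signed_dimvs[OF inj tilting_onD(1)[OF T(1)] _ _ x(1)[unfolded T(2)]])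
        (simp_all add: msupp_def)
    obtain a' where a': "\<forall>X\<in>T'. 0 < a' X" "\<forall>j\<in>{1..n}. cover_weight T' a' j = max 0 (x $ e j)"
      by (rule open_cone_signed_dimvs[OF inj tilting_onD(1)[OF T'(1)] _ _ x(2)[unfolded T'(2)]])
        (simp_all add: msupp_def)
    have "T = T'"
      using a(2) a'(2)
      by (intro cover_weight_determines[OF tilting_onD(2,1,3)[OF T(1)] a(1)
            tilting_onD(2,1,3)[OF T'(1)] a'(1)]) simp
    then show "TT = TT'"
      using T(2) T'(2) by simp
  qed
  moreover have "card ?\<T> = card (tilt_plus TYPE('k) orient n)"
    by (simp add: card_image inj_on_def)
  moreover have "P_plus TYPE('k) orient n e = (\<Union>TT\<in>?\<T>. sigma_two e TT)"
    by (simp add: P_plus_def sigma_plus_eq)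
  ultimately show ?thesis
    by simp
qed

lemma measure_P_clus:
  assumes bij: "bij_betw e {1..n} (UNIV :: 'n::finite set)"
  shows "measure lborel (P_clus TYPE('k::field) orient n e) = card (tilt_clus TYPE('k) orient n) / fact n"
proof -
  define simples where "simples T = (\<lambda>j. (j, j)) ` ({1..n} - msupp T)" for T
  let ?\<T> = "(\<lambda>T. (T, simples T)) ` tilt_clus TYPE('k) orient n"
  have inj: "inj_on e {1..n}"
    using bij by (simp add: bij_betw_def)
  have "measure lborel (\<Union>TT\<in>?\<T>. sigma_two e TT) = card ?\<T> / fact n"
  proof (rule measure_UN_sigma_two[OF bij])
    show "finite ?\<T>"
      using finite_tilting_modules(2) by blast
  next
    fix Tp Tm
    assume "(Tp, Tm) \<in> ?\<T>"
    then have T: "tilting_on TYPE('k) orient n (msupp Tp) Tp" and Tm: "Tm = simples Tp"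
      unfolding tilt_clus_def by auto
    have "msupp Tp \<subseteq> {1..n}"
      using msupp_subset[OF tilting_onD(1)[OF T]] .
    moreover have "Tm \<subseteq> intervals n"
      unfolding Tm simples_def intervals_def by auto
    moreover have "spanning_on e (msupp Tp) Tp"
      using tilting_on_spanning_on[OF T] calculation(1) .
    moreover have "spanning_on e ({1..n} - msupp Tp) Tm"
      unfolding Tm simples_def by (rule spanning_on_simples) simp
    ultimately show "Tp \<subseteq> intervals n \<and> Tm \<subseteq> intervals n \<and>
        (\<exists>I\<subseteq>{1..n}. spanning_on e I Tp \<and> spanning_on e ({1..n} - I) Tm)"
      using tilting_onD(1)[OF T] by blast
  next
    fix TT TT'
    assume "TT \<in> ?\<T>" "TT' \<in> ?\<T>"
      and "open_cone (signed_dimvs e TT) \<inter> open_cone (signed_dimvs e TT') \<noteq> {}"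
    then obtain T T' x where T: "tilting_on TYPE('k) orient n (msupp T) T" "TT = (T, simples T)"
      and T': "tilting_on TYPE('k) orient n (msupp T') T'" "TT' = (T', simples T')"
      and x: "x \<in> open_cone (signed_dimvs e TT)" "x \<in> open_cone (signed_dimvs e TT')"
      unfolding tilt_clus_def by auto
    have simples: "simples T \<subseteq> intervals n" "msupp T \<inter> msupp (simples T) = {}" for T
      unfolding simples_def msupp_simples intervals_def by auto
    obtain a where a: "\<forall>X\<in>T. 0 < a X" "\<forall>j\<in>{1..n}. cover_weight T a j = max 0 (x $ e j)"
      by (rule open_cone_signed_dimvs[OF inj tilting_onD(1)[OF T(1)] simples x(1)[unfolded T(2)]])
        blast
    obtain a' where a': "\<forall>X\<in>T'. 0 < a' X" "\<forall>j\<in>{1..n}. cover_weight T' a' j = max 0 (x $ e j)"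
      by (rule open_cone_signed_dimvs[OF inj tilting_onD(1)[OF T'(1)] simples x(2)[unfolded T'(2)]])
        blast
    have "T = T'"
      using a(2) a'(2)
      by (intro cover_weight_determines[OF tilting_onD(2,1,3)[OF T(1)] a(1)
            tilting_onD(2,1,3)[OF T'(1)] a'(1)]) simp
    then show "TT = TT'"
      using T(2) T'(2) by simp
  qed
  moreover have "card ?\<T> = card (tilt_clus TYPE('k) orient n)"
    by (simp add: card_image inj_on_def)
  moreover have "P_clus TYPE('k) orient n e = (\<Union>TT\<in>?\<T>. sigma_two e TT)"
    by (simp add: P_clus_def sigma_clus_eq simples_def)
  ultimately show ?thesis
    by simp
qed

lemma tilting_on_msupp_subset: "tilting_on TYPE('k::field) orient n I T \<Longrightarrow> msupp T \<subseteq> I"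
  unfolding tilting_on_def msupp_def by blast

lemma measure_P_two:
  assumes bij: "bij_betw e {1..n} (UNIV :: 'n::finite set)"
  shows "measure lborel (P_two TYPE('k::field) orient n e) = card (tilt_two TYPE('k) orient n) / fact n"
  unfolding P_two_def
proof (rule measure_UN_sigma_two[OF bij finite_tilting_modules(3)])
  fix Tp Tm
  assume "(Tp, Tm) \<in> tilt_two TYPE('k) orient n"
  then obtain I where I: "I \<subseteq> {1..n}" "tilting_on TYPE('k) orient n I Tp"
    "tilting_on TYPE('k) orient n ({1..n} - I) Tm"
    unfolding tilt_two_def by blast
  have "spanning_on e I Tp" "spanning_on e ({1..n} - I) Tm"
    using tilting_on_spanning_on[OF I(2,1)] tilting_on_spanning_on[OF I(3)] by auto
  then show "Tp \<subseteq> intervals n \<and> Tm \<subseteq> intervals n \<and>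
      (\<exists>I\<subseteq>{1..n}. spanning_on e I Tp \<and> spanning_on e ({1..n} - I) Tm)"
    using tilting_onD(1)[OF I(2)] tilting_onD(1)[OF I(3)] I(1) by blast
next
  have inj: "inj_on e {1..n}"
    using bij by (simp add: bij_betw_def)
  have pair: "\<exists>I. tilting_on TYPE('k) orient n I Tp \<and> tilting_on TYPE('k) orient n ({1..n} - I) Tm"
    if "(Tp, Tm) \<in> tilt_two TYPE('k) orient n" for Tp Tm
    using that unfolding tilt_two_def by blast
  fix TT TT'
  assume TT: "TT \<in> tilt_two TYPE('k) orient n" "TT' \<in> tilt_two TYPE('k) orient n"
    and "open_cone (signed_dimvs e TT) \<inter> open_cone (signed_dimvs e TT') \<noteq> {}"
  then obtain x where x: "x \<in> open_cone (signed_dimvs e TT)" "x \<in> open_cone (signed_dimvs e TT')"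
    by blast
  obtain Tp Tm Tp' Tm' where eq: "TT = (Tp, Tm)" "TT' = (Tp', Tm')"
    by (cases TT, cases TT') auto
  obtain I I' where T: "tilting_on TYPE('k) orient n I Tp" "tilting_on TYPE('k) orient n ({1..n} - I) Tm"
    and T': "tilting_on TYPE('k) orient n I' Tp'" "tilting_on TYPE('k) orient n ({1..n} - I') Tm'"
    using pair TT unfolding eq by metis
  have disj: "msupp Tp \<inter> msupp Tm = {}" "msupp Tp' \<inter> msupp Tm' = {}"
    using tilting_on_msupp_subset[OF T(1)] tilting_on_msupp_subset[OF T(2)]
      tilting_on_msupp_subset[OF T'(1)] tilting_on_msupp_subset[OF T'(2)] by blast+
  obtain a b where ab: "\<forall>X\<in>Tp. 0 < a X" "\<forall>Y\<in>Tm. 0 < b Y"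
      "\<forall>j\<in>{1..n}. cover_weight Tp a j = max 0 (x $ e j) \<and> cover_weight Tm b j = max 0 (- x $ e j)"
    by (rule open_cone_signed_dimvs[OF inj tilting_onD(1)[OF T(1)] tilting_onD(1)[OF T(2)]
          disj(1) x(1)[unfolded eq(1)]])
  obtain a' b' where ab': "\<forall>X\<in>Tp'. 0 < a' X" "\<forall>Y\<in>Tm'. 0 < b' Y"
      "\<forall>j\<in>{1..n}. cover_weight Tp' a' j = max 0 (x $ e j) \<and> cover_weight Tm' b' j = max 0 (- x $ e j)"
    by (rule open_cone_signed_dimvs[OF inj tilting_onD(1)[OF T'(1)] tilting_onD(1)[OF T'(2)]
          disj(2) x(2)[unfolded eq(2)]])
  have "Tp = Tp'"
    using ab(3) ab'(3)
    by (intro cover_weight_determines[OF tilting_onD(2,1,3)[OF T(1)] ab(1)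
          tilting_onD(2,1,3)[OF T'(1)] ab'(1)]) simp
  moreover have "Tm = Tm'"
    using ab(3) ab'(3)
    by (intro cover_weight_determines[OF tilting_onD(2,1,3)[OF T(2)] ab(2)
          tilting_onD(2,1,3)[OF T'(2)] ab'(2)]) simp
  ultimately show "TT = TT'"
    using eq by simp
qed

theorem theorem1p1:
  fixes orient :: "nat \<Rightarrow> bool" and n :: nat and e :: "nat \<Rightarrow> 'n::finite"
  assumes "1 \<le> n" and "bij_betw e {1..n} (UNIV :: 'n set)"
  shows "ivol n (P_plus TYPE('k::field) orient n e) = real (card (tilt_plus TYPE('k) orient n))
       \<and> ivol n (P_clus TYPE('k) orient n e) = real (card (tilt_clus TYPE('k) orient n))
       \<and> ivol n (P_two TYPE('k) orient n e) = real (card (tilt_two TYPE('k) orient n))"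
  using measure_P_plus[OF assms(2), where 'k='k and orient=orient]
    measure_P_clus[OF assms(2), where 'k='k and orient=orient]
    measure_P_two[OF assms(2), where 'k='k and orient=orient]
  unfolding ivol_def by simp

end
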